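(* Suppose Assumptions 1–3 hold with $\kappa>2$, and let $0<\epsilon<\min\left(\frac{\kappa-2}{6(\kappa+1)},\frac1{15}\right)$. Then for any fixed $C>0$, uniformly in $z\in\mathbb C$ with $|z-x^*|\le Cn^{-1/3+\epsilon}$, as $n\to\infty$, \[G_{\mu_n}(z)=G_0+G_1(z-x^* )+\frac{G_2}{2}(z-x^* )^2+\mathcal O(n^{-2/3-2\epsilon}),\qquad G_{\mu_n}''(z)=G_2+\mathcal O(n^{-\epsilon}).\]
   Context: $\mu_n=\frac1n\sum_{j=1}^n\delta_{x_j^{(n)}}$ are probability measures (empirical measures of initial points) with distribution functions $F_n$. Assumption 1: the supports of all $\mu_n$ lie in a fixed bounded set, $\mu_n\to\mu$ weakly, $\mu$ has a density $\psi$ continuous on its support and $\psi(x)\sim c|x-x^*|^\kappa$ as $x\to x^*$ for some $x^*\in\mathbb R$, $c>0$. Assumption 2: $|F_n(x)-F(x)|\le M_0/n$ for all $x\in\mathbb R$, $n\ge n_0$, with $F$ the distribution function of $\mu$. Assumption 3: for some $m_0>0$ and all $n\ge n_0$, $[x^*-m_0n^{-1/(\kappa+1)},x^*+m_0n^{-1/(\kappa+1)}]$ does not meet the support of $\mu_n$. Notation: $G_\nu(z)=\int\frac{\nu(ds)}{z-s}$ (Stieltjes transform), $G_j:=G_\mu^{(j)}(x^* )=(-1)^jj!\int\frac{\mu(ds)}{(x^*-s)^{j+1}}$, $j=0,1,2,3$. *)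

theory Defs
  imports "HOL-Probability.Probability" "HOL-Library.Landau_Symbols"
begin

text \<open>Empirical data: the n-th configuration consists of the points x n 1, ..., x n n;
  the empirical measure is mu_n = (1/n) sum_j delta_{x n j}.\<close>

definition emp_cdf :: "(nat \<Rightarrow> nat \<Rightarrow> real) \<Rightarrow> nat \<Rightarrow> real \<Rightarrow> real" where
  "emp_cdf x n t = real (card {j \<in> {1..n}. x n j \<le> t}) / real n"

definition emp_int :: "(nat \<Rightarrow> nat \<Rightarrow> real) \<Rightarrow> nat \<Rightarrow> (real \<Rightarrow> real) \<Rightarrow> real" where
  "emp_int x n f = (\<Sum>j=1..n. f (x n j)) / real n"

definition emp_stieltjes :: "(nat \<Rightarrow> nat \<Rightarrow> real) \<Rightarrow> nat \<Rightarrow> complex \<Rightarrow> complex" where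
  "emp_stieltjes x n z = (\<Sum>j=1..n. 1 / (z - complex_of_real (x n j))) / of_nat n"

definition emp_weak_conv :: "(nat \<Rightarrow> nat \<Rightarrow> real) \<Rightarrow> real measure \<Rightarrow> bool" where
  "emp_weak_conv x M \<longleftrightarrow>
     (\<forall>f. continuous_on UNIV f \<and> bounded (range f) \<longrightarrow>
        (\<lambda>n. emp_int x n f) \<longlonglongrightarrow> integral\<^sup>L M f)"

definition msupp :: "real measure \<Rightarrow> real set" where
  "msupp M = {t. \<forall>e>0. emeasure M (ball t e) > 0}"

text \<open>G_j := G_mu^{(j)}(x*) = (-1)^j j! int mu(ds)/(x*-s)^{j+1}.\<close>
definition Gcoef :: "real measure \<Rightarrow> real \<Rightarrow> nat \<Rightarrow> real" where
  "Gcoef M xs j = (-1) ^ j * fact j * (\<integral>s. 1 / (xs - s) ^ (j + 1) \<partial>M)"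

end

theory Submission
  imports Defs
begin

text \<open>Write \<open>u = z - xs\<close> and \<open>v\<^sub>j = xs - x\<^sub>j\<close>. Expanding each \<open>1/(u + v\<^sub>j)\<close> to
  third order in \<open>u\<close> expresses \<open>G\<^sub>\<mu>\<^sub>n(z)\<close> through the empirical moments
  \<open>E\<^sub>k = (1/n) \<Sum>\<^sub>j v\<^sub>j\<^sup>-\<^sup>k\<close>, \<open>k = 1, 2, 3\<close>, plus a remainder of order
  \<open>|u|\<^sup>3 (1/n) \<Sum>\<^sub>j |v\<^sub>j|\<^sup>-\<^sup>4\<close>. By Assumption 3 no point lies within
  \<open>\<delta>\<^sub>n = m0 n^(-1/(\<kappa>+1))\<close> of \<open>xs\<close>, so on either side of the gap \<open>E\<^sub>k\<close> can be
  compared with the corresponding moment of \<open>\<mu>\<close> by integrating by parts against the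
  distribution functions: Assumption 2 bounds the difference by \<open>O(n\<^sup>-\<^sup>1 \<delta>\<^sub>n\<^sup>-\<^sup>k)\<close>, and the
  bound \<open>\<psi>(t) \<le> 2c|t - xs|\<^sup>\<kappa>\<close> near \<open>xs\<close> controls the mass of \<open>\<mu>\<close> inside the gap.
  For \<open>|u| \<le> C n^(-1/3+\<epsilon>)\<close> every error term is then \<open>O(n^(-2/3-2\<epsilon>))\<close>. The second
  derivative is the same computation for \<open>\<Sum>\<^sub>j (z - x\<^sub>j)\<^sup>-\<^sup>3\<close>.\<close>

lemma lborel_integral_Icc_deriv:
  fixes g g' :: "real \<Rightarrow> real"
  assumes ab: "a \<le> b"
    and der: "\<And>t. a \<le> t \<Longrightarrow> t \<le> b \<Longrightarrow> (g has_real_derivative g' t) (at t)"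
    and cont: "continuous_on {a..b} g'"
  shows "integrable lborel (\<lambda>t. indicator {a..b} t * g' t)"
    and "(\<integral>t. indicator {a..b} t * g' t \<partial>lborel) = g b - g a"
proof -
  show "integrable lborel (\<lambda>t. indicator {a..b} t * g' t)"
    using borel_integrable_atLeastAtMost'[OF cont] by (simp add: set_integrable_def)
  have "(g has_vector_derivative g' t) (at t within {a..b})" if "a \<le> t" "t \<le> b" for t
    using der[OF that] has_real_derivative_iff_has_vector_derivative has_field_derivative_at_within
    by blast
  from integral_FTC_atLeastAtMost[OF ab this cont]
  show "(\<integral>t. indicator {a..b} t * g' t \<partial>lborel) = g b - g a" by simp
qed

lemma integrable_Icc_mult_bounded:
  fixes f h :: "real \<Rightarrow> real"
  assumes cont: "continuous_on {a..b} f" and fm: "f \<in> borel_measurable borel"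
    and hm: "h \<in> borel_measurable borel" and hb: "\<And>t. a \<le> t \<Longrightarrow> t \<le> b \<Longrightarrow> \<bar>h t\<bar> \<le> B"
  shows "integrable lborel (\<lambda>t. indicator {a..b} t * f t * h t)"
proof -
  obtain K where K: "K \<ge> 0" "\<And>t. t \<in> {a..b} \<Longrightarrow> norm (f t) \<le> K"
    using continuous_on_compact_bound[OF compact_Icc cont] by blast
  have Ib: "integrable lborel (\<lambda>t. indicator {a..b} t * (K * B))"
  proof (cases "a \<le> b")
    case True then show ?thesis
      by (intro integrable_mult_left integrable_real_indicator) (auto simp: emeasure_lborel_Icc)
  qed simp
  have "\<bar>h t\<bar> \<le> \<bar>B\<bar>" if "a \<le> t" "t \<le> b" for t
    using hb[OF that] by linarith
  then have "AE t in lborel. norm (indicator {a..b} t * f t * h t) \<le> norm (indicator {a..b} t * (K * B))"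
    using K by (intro AE_I2) (auto simp: indicator_def abs_mult intro!: mult_mono)
  from Bochner_Integration.integrable_bound[OF Ib _ this] show ?thesis
    using fm hm by simp
qed

lemma nn_integral_Icc_neg_deriv:
  fixes g g' :: "real \<Rightarrow> real"
  assumes sb: "s \<le> b"
    and der: "\<And>t. s \<le> t \<Longrightarrow> t \<le> b \<Longrightarrow> (g has_real_derivative g' t) (at t)"
    and cont: "continuous_on {s..b} g'" and neg: "\<And>t. s \<le> t \<Longrightarrow> t \<le> b \<Longrightarrow> g' t \<le> 0"
  shows "(\<integral>\<^sup>+t. ennreal (indicator {s..b} t * - g' t) \<partial>lborel) = ennreal (g s - g b)"
proof -
  have der': "\<And>t. s \<le> t \<Longrightarrow> t \<le> b \<Longrightarrow> ((\<lambda>t. - g t) has_real_derivative - g' t) (at t)"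
    using der by (auto intro: derivative_intros)
  have cont': "continuous_on {s..b} (\<lambda>t. - g' t)" using cont by (intro continuous_intros)
  have "(\<integral>\<^sup>+t. ennreal (indicator {s..b} t * - g' t) \<partial>lborel)
      = ennreal (\<integral>t. indicator {s..b} t * - g' t \<partial>lborel)"
    using neg by (intro nn_integral_eq_integral lborel_integral_Icc_deriv(1)[OF sb der' cont'])
       (auto simp: indicator_def)
  also have "\<dots> = ennreal (g s - g b)"
    using lborel_integral_Icc_deriv(2)[OF sb der' cont'] by simp
  finally show ?thesis .
qed

text \<open>Tonelli, applied to \<open>g s - g b = \<integral>\<^sub>s\<^sup>b (- g')\<close>.\<close>
lemma integral_Ioc_by_parts:
  fixes \<nu> :: "real measure" and g g' :: "real \<Rightarrow> real"
  assumes fin: "finite_measure \<nu>" and sets: "sets \<nu> = sets borel" and ab: "a \<le> b"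
    and der: "\<And>t. a \<le> t \<Longrightarrow> t \<le> b \<Longrightarrow> (g has_real_derivative g' t) (at t)"
    and cont: "continuous_on {a..b} g'" and neg: "\<And>t. a \<le> t \<Longrightarrow> t \<le> b \<Longrightarrow> g' t \<le> 0"
    and gm: "g' \<in> borel_measurable borel"
  shows "integrable \<nu> (\<lambda>s. indicator {a<..b} s * g s)"
    and "(\<integral>s. indicator {a<..b} s * g s \<partial>\<nu>) = g b * measure \<nu> {a<..b}
        + (\<integral>t. indicator {a..b} t * (- g' t) * measure \<nu> {a<..t} \<partial>lborel)"
proof -
  interpret finite_measure \<nu> by (rule fin)
  interpret P: pair_sigma_finite \<nu> lborel
    by (simp add: lborel.sigma_finite_measure_axioms pair_sigma_finite.intro sigma_finite_measure_axioms)
  have gdec: "g t \<le> g s" if "a \<le> s" "s \<le> t" "t \<le> b" for s t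
    using DERIV_nonpos_imp_nonincreasing[of s t g] that der neg by force
  define R where "R = (\<lambda>t. indicator {a..b} t * (- g' t) * measure \<nu> {a<..t})"
  have m_mono: "mono (\<lambda>t. measure \<nu> {a<..t})"
    by (intro monoI finite_measure_mono) (auto simp: sets)
  have R_int: "integrable lborel R"
    unfolding R_def using borel_measurable_mono[OF m_mono] bounded_measure gm cont
    by (intro integrable_Icc_mult_bounded[where B = "measure \<nu> (space \<nu>)"])
       (auto intro: continuous_intros)
  have R_nonneg: "0 \<le> R t" for t
    unfolding R_def using neg[of t] by (auto simp: indicator_def mult_nonpos_nonneg)
  define H where "H = (\<lambda>s t. ennreal (indicator {a<..b} s * indicator {s..b} t * (- g' t)))"
  have Hm: "case_prod H \<in> borel_measurable (\<nu> \<Otimes>\<^sub>M lborel)"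
  proof -
    note gm[measurable]
    have "(\<lambda>(s::real, t::real). indicator {a<..b} s * indicator {s..b} t * (- g' t))
        = (\<lambda>(s, t). if a < s \<and> s \<le> b \<and> s \<le> t \<and> t \<le> b then - g' t else 0)"
      by (auto simp: indicator_def fun_eq_iff)
    moreover have "(\<lambda>(s::real, t::real). if a < s \<and> s \<le> b \<and> s \<le> t \<and> t \<le> b then - g' t else 0)
        \<in> borel_measurable (borel \<Otimes>\<^sub>M borel)"
      by measurable
    ultimately have "(\<lambda>(s::real, t::real). indicator {a<..b} s * indicator {s..b} t * (- g' t))
        \<in> borel_measurable (borel \<Otimes>\<^sub>M borel)"
      by simp
    moreover have "sets (\<nu> \<Otimes>\<^sub>M lborel) = sets (borel \<Otimes>\<^sub>M borel)"
      using sets by (intro sets_pair_measure_cong) auto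
    ultimately show ?thesis
      unfolding H_def measurable_cong_sets[OF \<open>sets (\<nu> \<Otimes>\<^sub>M lborel) = _\<close> refl] by measurable
  qed
  have inner_t: "(\<integral>\<^sup>+t. H s t \<partial>lborel) = ennreal (indicator {a<..b} s * (g s - g b))" for s
  proof (cases "s \<in> {a<..b}")
    case True
    have "(\<integral>\<^sup>+t. H s t \<partial>lborel) = (\<integral>\<^sup>+t. ennreal (indicator {s..b} t * - g' t) \<partial>lborel)"
      using True unfolding H_def by (intro nn_integral_cong) (auto simp: indicator_def)
    also have "\<dots> = ennreal (g s - g b)"
      using True der neg by (intro nn_integral_Icc_neg_deriv continuous_on_subset[OF cont]) auto
    finally show ?thesis using True by simp
  next
    case False
    then show ?thesis unfolding H_def by simp
  qed
  have inner_s: "(\<integral>\<^sup>+s. H s t \<partial>\<nu>) = ennreal (R t)" for t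
  proof -
    have "H s t = ennreal (indicator {a..b} t * (- g' t)) * indicator {a<..t} s" for s
      unfolding H_def by (auto simp: indicator_def)
    then have "(\<integral>\<^sup>+s. H s t \<partial>\<nu>) = ennreal (indicator {a..b} t * (- g' t)) * emeasure \<nu> {a<..t}"
      by (simp add: nn_integral_cmult_indicator sets)
    then show ?thesis
      unfolding R_def using neg[of t]
      by (auto simp: emeasure_eq_measure ennreal_mult[symmetric] indicator_def)
  qed
  have "(\<integral>\<^sup>+s. ennreal (indicator {a<..b} s * (g s - g b)) \<partial>\<nu>) = (\<integral>\<^sup>+t. ennreal (R t) \<partial>lborel)"
    using P.Fubini'[OF Hm] inner_t inner_s by simp
  also have "\<dots> = ennreal (integral\<^sup>L lborel R)"
    using R_int R_nonneg by (intro nn_integral_eq_integral) auto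
  finally have eq: "(\<integral>\<^sup>+s. ennreal (indicator {a<..b} s * (g s - g b)) \<partial>\<nu>) = ennreal (integral\<^sup>L lborel R)" .
  have gcont: "continuous_on {a..b} g"
    by (meson DERIV_isCont atLeastAtMost_iff continuous_at_imp_continuous_on der)
  have "(\<lambda>s. indicator {a<..b} s * (indicator {a..b} s *\<^sub>R g s)) \<in> borel_measurable borel"
    using borel_measurable_continuous_on_indicator[OF _ gcont] by measurable
  moreover have "(\<lambda>s. indicator {a<..b} s * (indicator {a..b} s *\<^sub>R g s)) = (\<lambda>s. indicator {a<..b} s * g s)"
    by (auto simp: indicator_def fun_eq_iff)
  ultimately have gm2: "(\<lambda>s. indicator {a<..b} s * g s) \<in> borel_measurable \<nu>"
    unfolding measurable_cong_sets[OF sets refl] by simp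
  have "integrable \<nu> (\<lambda>s. indicator {a<..b} s * (g s - g b)) \<and>
      (\<integral>s. indicator {a<..b} s * (g s - g b) \<partial>\<nu>) = integral\<^sup>L lborel R"
    using gm2 gdec eq R_nonneg
      borel_measurable_diff[OF gm2, of "\<lambda>s. indicator {a<..b} s * g b"]
    by (intro nn_integral_eq_integrable[THEN iffD1])
       (auto simp: right_diff_distrib indicator_def integral_nonneg_AE
         measurable_cong_sets[OF sets refl])
  moreover have int2: "integrable \<nu> (\<lambda>s. indicator {a<..b} s * g b)"
    by (intro integrable_mult_left integrable_real_indicator) (auto simp: sets emeasure_eq_measure)
  moreover have split: "(\<lambda>s. indicator {a<..b} s * g s)
      = (\<lambda>s. indicator {a<..b} s * (g s - g b) + indicator {a<..b} s * g b)"
    by (auto simp: fun_eq_iff algebra_simps)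
  ultimately show "integrable \<nu> (\<lambda>s. indicator {a<..b} s * g s)"
    and "(\<integral>s. indicator {a<..b} s * g s \<partial>\<nu>) = g b * measure \<nu> {a<..b}
        + (\<integral>t. indicator {a..b} t * (- g' t) * measure \<nu> {a<..t} \<partial>lborel)"
    unfolding R_def by (auto simp: sets mult.commute)
qed

lemma sum_Ioc_by_parts:
  fixes y :: "nat \<Rightarrow> real" and g g' :: "real \<Rightarrow> real" and J :: "nat set"
  assumes fJ: "finite J"
    and der: "\<And>t. a \<le> t \<Longrightarrow> t \<le> b \<Longrightarrow> (g has_real_derivative g' t) (at t)"
    and cont: "continuous_on {a..b} g'"
  shows "(\<Sum>j\<in>J. indicator {a<..b} (y j) * g (y j)) = g b * real (card {j\<in>J. a < y j \<and> y j \<le> b})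
     + (\<integral>t. indicator {a..b} t * (- g' t) * real (card {j\<in>J. a < y j \<and> y j \<le> t}) \<partial>lborel)"
proof -
  define f where "f = (\<lambda>j t. indicator {a<..b} (y j) * (indicator {y j..b} t * (- g' t)))"
  have FTC: "integrable lborel (\<lambda>t. indicator {y j..b} t * g' t)
      \<and> (\<integral>t. indicator {y j..b} t * g' t \<partial>lborel) = g b - g (y j)" if "y j \<in> {a<..b}" for j
    using that der
    by (intro conjI lborel_integral_Icc_deriv[where g = g] continuous_on_subset[OF cont]) auto
  have fint: "integrable lborel (f j)" for j
    using FTC[of j] unfolding f_def by (cases "y j \<in> {a<..b}") auto
  have fval: "(\<integral>t. f j t \<partial>lborel) = indicator {a<..b} (y j) * (g (y j) - g b)" for j
    using FTC[of j] unfolding f_def by (cases "y j \<in> {a<..b}") auto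
  have count: "(\<Sum>j\<in>J. indicator {a<..t} (y j) * c) = c * real (card {j\<in>J. a < y j \<and> y j \<le> t})"
    for t c :: real
  proof -
    have "(\<Sum>j\<in>J. indicator {a<..t} (y j) * c) = (\<Sum>j\<in>J. if a < y j \<and> y j \<le> t then c else 0)"
      by (intro sum.cong refl) (auto simp: indicator_def)
    also have "\<dots> = (\<Sum>j\<in>{j\<in>J. a < y j \<and> y j \<le> t}. c)"
      by (rule sum.inter_filter[OF fJ, symmetric])
    finally show ?thesis by simp
  qed
  have pw: "(\<Sum>j\<in>J. f j t) = indicator {a..b} t * (- g' t) * real (card {j\<in>J. a < y j \<and> y j \<le> t})" for t
  proof -
    have "(\<Sum>j\<in>J. f j t) = (\<Sum>j\<in>J. indicator {a<..t} (y j) * (indicator {a..b} t * (- g' t)))"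
      unfolding f_def by (intro sum.cong refl) (auto simp: indicator_def)
    also have "\<dots> = indicator {a..b} t * (- g' t) * real (card {j\<in>J. a < y j \<and> y j \<le> t})"
      by (rule count)
    finally show ?thesis .
  qed
  have "(\<Sum>j\<in>J. indicator {a<..b} (y j) * g (y j))
      = (\<Sum>j\<in>J. indicator {a<..b} (y j) * g b) + (\<Sum>j\<in>J. \<integral>t. f j t \<partial>lborel)"
    unfolding fval by (simp add: sum.distrib[symmetric] algebra_simps)
  also have "(\<Sum>j\<in>J. \<integral>t. f j t \<partial>lborel) = (\<integral>t. (\<Sum>j\<in>J. f j t) \<partial>lborel)"
    using fint by (intro Bochner_Integration.integral_sum[symmetric]) auto
  finally show ?thesis unfolding pw count .
qed

text \<open>A Koksma-type inequality: both sides are integrated by parts.\<close>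
lemma discrepancy_Ioc_decreasing:
  fixes \<nu> :: "real measure" and y :: "nat \<Rightarrow> real" and g g' :: "real \<Rightarrow> real" and S :: "real set"
  assumes fin: "finite_measure \<nu>" and sets: "sets \<nu> = sets borel" and ab: "a \<le> b"
    and der: "\<And>t. a \<le> t \<Longrightarrow> t \<le> b \<Longrightarrow> (g has_real_derivative g' t) (at t)"
    and cont: "continuous_on {a..b} g'" and neg: "\<And>t. a \<le> t \<Longrightarrow> t \<le> b \<Longrightarrow> g' t \<le> 0"
    and gm: "g' \<in> borel_measurable borel" and gb: "0 \<le> g b"
    and n: "n > 0" and fS: "finite S" and bS: "b \<notin> S"
    and hyp: "\<And>t. a \<le> t \<Longrightarrow> t \<le> b \<Longrightarrow> t \<notin> S \<Longrightarrow>
       \<bar>real (card {j\<in>{1..n}. a < y j \<and> y j \<le> t}) / real n - measure \<nu> {a<..t}\<bar> \<le> \<eta>"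
  shows "\<bar>(\<Sum>j=1..n. indicator {a<..b} (y j) * g (y j)) / real n
           - (\<integral>s. indicator {a<..b} s * g s \<partial>\<nu>)\<bar> \<le> \<eta> * g a"
proof -
  interpret finite_measure \<nu> by (rule fin)
  define c where "c = (\<lambda>t. real (card {j\<in>{1..n}. a < y j \<and> y j \<le> t}) / real n)"
  define m where "m = (\<lambda>t. measure \<nu> {a<..t})"
  define w where "w = (\<lambda>t. indicator {a..b} t * (- g' t))"
  have c_mono: "mono c" unfolding c_def
    by (intro monoI divide_right_mono of_nat_mono card_mono) auto
  have c_bd: "\<bar>c t\<bar> \<le> 1" for t
  proof -
    have "card {j\<in>{1..n}. a < y j \<and> y j \<le> t} \<le> card {1..n}" by (intro card_mono) auto
    then show ?thesis unfolding c_def using n by (auto simp: divide_le_eq)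
  qed
  have m_mono: "mono m" unfolding m_def
    by (intro monoI finite_measure_mono) (auto simp: sets)
  have ncont: "continuous_on {a..b} (\<lambda>t. - g' t)" using cont by (intro continuous_intros)
  have int: "integrable lborel (\<lambda>t. w t * h t)"
    if "h \<in> borel_measurable borel" "\<And>t. \<bar>h t\<bar> \<le> B" for h B
    unfolding w_def using that gm by (intro integrable_Icc_mult_bounded[OF ncont]) auto
  have int_c: "integrable lborel (\<lambda>t. w t * c t)"
    using c_bd borel_measurable_mono[OF c_mono] by (intro int)
  have int_m: "integrable lborel (\<lambda>t. w t * m t)"
    using bounded_measure borel_measurable_mono[OF m_mono] unfolding m_def by (intro int) auto
  have E: "(\<Sum>j=1..n. indicator {a<..b} (y j) * g (y j)) / real n = g b * c b + (\<integral>t. w t * c t \<partial>lborel)"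
  proof -
    have S: "(\<Sum>j=1..n. indicator {a<..b} (y j) * g (y j))
        = g b * real (card {j\<in>{1..n}. a < y j \<and> y j \<le> b})
          + (\<integral>t. w t * real (card {j\<in>{1..n}. a < y j \<and> y j \<le> t}) \<partial>lborel)"
      unfolding w_def by (rule sum_Ioc_by_parts[OF finite_atLeastAtMost der cont])
    have "(\<integral>t. w t * real (card {j\<in>{1..n}. a < y j \<and> y j \<le> t}) \<partial>lborel) / real n
        = (\<integral>t. w t * real (card {j\<in>{1..n}. a < y j \<and> y j \<le> t}) / real n \<partial>lborel)"
      by (rule integral_divide_zero[symmetric])
    then show ?thesis
      unfolding S c_def add_divide_distrib by simp
  qed
  have I: "(\<integral>s. indicator {a<..b} s * g s \<partial>\<nu>) = g b * m b + (\<integral>t. w t * m t \<partial>lborel)"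
    unfolding m_def w_def by (rule integral_Ioc_by_parts(2)[OF fin sets ab der cont neg gm])
  have "AE t in lborel. t \<notin> S"
    by (intro AE_not_in countable_imp_null_set_lborel countable_finite fS)
  then have "AE t in lborel. \<bar>w t * (c t - m t)\<bar> \<le> w t * \<eta>"
  proof eventually_elim
    case (elim t)
    show ?case
    proof (cases "t \<in> {a..b}")
      case True
      then have "\<bar>c t - m t\<bar> \<le> \<eta>" using hyp[of t] elim unfolding c_def m_def by auto
      then show ?thesis using True neg[of t] unfolding w_def by (auto simp: abs_mult intro: mult_left_mono_neg)
    qed (simp add: w_def)
  qed
  then have bnd: "\<bar>\<integral>t. w t * (c t - m t) \<partial>lborel\<bar> \<le> (\<integral>t. w t * \<eta> \<partial>lborel)"
    using int_c int_m int[of "\<lambda>_. \<eta>" "\<bar>\<eta>\<bar>"]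
    by (intro order_trans[OF integral_abs_bound] integral_mono_AE) (auto simp: right_diff_distrib)
  have eint: "(\<integral>t. w t * \<eta> \<partial>lborel) = \<eta> * (g a - g b)"
  proof -
    have "(\<integral>t. w t * \<eta> \<partial>lborel) = (\<integral>t. (- \<eta>) * (indicator {a..b} t * g' t) \<partial>lborel)"
      unfolding w_def by (intro Bochner_Integration.integral_cong) simp_all
    also have "\<dots> = (- \<eta>) * (g b - g a)"
      using lborel_integral_Icc_deriv(2)[OF ab der cont] by simp
    finally show ?thesis by (simp add: algebra_simps)
  qed
  have "(\<Sum>j=1..n. indicator {a<..b} (y j) * g (y j)) / real n - (\<integral>s. indicator {a<..b} s * g s \<partial>\<nu>)
     = g b * (c b - m b) + (\<integral>t. w t * (c t - m t) \<partial>lborel)"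
    unfolding E I using int_c int_m by (simp add: algebra_simps)
  moreover have "\<bar>g b * (c b - m b)\<bar> \<le> g b * \<eta>"
    using hyp[of b] ab bS gb unfolding c_def m_def by (auto simp: abs_mult intro: mult_left_mono)
  ultimately show ?thesis
    using bnd eint by (simp add: algebra_simps)
qed

lemma eventually_mult_powr_le:
  assumes "e < 0" "0 < D"
  shows "eventually (\<lambda>n. m * real n powr e \<le> D) sequentially"
proof -
  have "((\<lambda>n. m * real n powr e) \<longlongrightarrow> 0) sequentially"
    by (intro tendsto_mult_right_zero tendsto_neg_powr[OF assms(1)] filterlim_real_sequentially)
  from order_tendstoD(2)[OF this assms(2)] show ?thesis
    by (rule eventually_mono) simp
qed

lemma nn_integral_power_singularity_le:
  fixes \<phi> :: "real \<Rightarrow> real"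
  assumes \<phi>m: "\<phi> \<in> borel_measurable borel" and \<phi>0: "\<And>t. 0 \<le> \<phi> t" and c: "0 < c"
    and bd: "\<And>t. xs < t \<Longrightarrow> t < xs + \<rho> \<Longrightarrow> \<phi> t \<le> 2 * c * (t - xs) powr \<kappa>"
    and q: "q < \<kappa> + 1" and \<delta>: "0 < \<delta>" "\<delta> < \<rho>"
  shows "(\<integral>\<^sup>+t. ennreal (indicator {xs<..xs+\<delta>} t * (t - xs) powr (-q) * \<phi> t) \<partial>lborel)
      \<le> ennreal (2 * c / (\<kappa> + 1 - q) * \<delta> powr (\<kappa> + 1 - q))"
proof -
  have pw: "ennreal (indicator {xs<..xs+\<delta>} t * (t - xs) powr (-q) * \<phi> t)
      \<le> ennreal (2 * c) * ennreal (indicator {xs<..xs+\<delta>} t * (t - xs) powr (\<kappa> - q))" for t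
  proof (cases "t \<in> {xs<..xs+\<delta>}")
    case True
    then have "(t - xs) powr (-q) * \<phi> t \<le> (t - xs) powr (-q) * (2 * c * (t - xs) powr \<kappa>)"
      using bd \<delta> by (intro mult_left_mono) auto
    also have "\<dots> = 2 * c * (t - xs) powr (\<kappa> - q)"
      by (simp add: powr_add[symmetric] algebra_simps)
    finally show ?thesis using True c
      by (simp add: ennreal_mult[symmetric] ennreal_leI)
  qed simp
  have "(\<integral>\<^sup>+t. ennreal (indicator {xs<..xs+\<delta>} t * (t - xs) powr (\<kappa> - q)) \<partial>lborel)
      = ennreal \<bar>1\<bar> * (\<integral>\<^sup>+t. ennreal (indicator {xs<..xs+\<delta>} (xs + 1 * t)
          * (xs + 1 * t - xs) powr (\<kappa> - q)) \<partial>lborel)"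
    by (rule nn_integral_real_affine) auto
  also have "\<dots> = (\<integral>\<^sup>+t. ennreal (t powr (\<kappa> - q)) * indicator {0..\<delta>} t \<partial>lborel)"
    by (simp only: abs_one ennreal_1 mult_1 mult_1_left, intro nn_integral_cong)
       (auto simp: indicator_def)
  also have "\<dots> = ennreal (\<delta> powr (\<kappa> - q + 1) / (\<kappa> - q + 1))"
    using q \<delta> by (intro nn_integral_has_integral_lebesgue' has_integral_powr_from_0) auto
  finally have J: "(\<integral>\<^sup>+t. ennreal (indicator {xs<..xs+\<delta>} t * (t - xs) powr (\<kappa> - q)) \<partial>lborel)
      = ennreal (\<delta> powr (\<kappa> - q + 1) / (\<kappa> - q + 1))" .
  have "(\<integral>\<^sup>+t. ennreal (indicator {xs<..xs+\<delta>} t * (t - xs) powr (-q) * \<phi> t) \<partial>lborel)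
      \<le> (\<integral>\<^sup>+t. ennreal (2 * c) * ennreal (indicator {xs<..xs+\<delta>} t * (t - xs) powr (\<kappa> - q)) \<partial>lborel)"
    by (intro nn_integral_mono pw)
  also have "\<dots> = ennreal (2 * c) * ennreal (\<delta> powr (\<kappa> - q + 1) / (\<kappa> - q + 1))"
    by (subst nn_integral_cmult) (auto simp: J)
  also have "\<dots> = ennreal (2 * c / (\<kappa> + 1 - q) * \<delta> powr (\<kappa> + 1 - q))"
    using c q by (simp add: ennreal_mult[symmetric] algebra_simps)
  finally show ?thesis .
qed

text \<open>The gap \<open>(xs, xs + \<delta>]\<close> carries no points and contributes at most \<open>G\<close>; on
  \<open>(xs + \<delta>, B]\<close> apply \<open>discrepancy_Ioc_decreasing\<close> to \<open>g(s) = (s - xs)\<^sup>-\<^sup>q\<close>.\<close>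
lemma Ioi_power_discrepancy_le:
  fixes \<nu> :: "real measure" and y :: "nat \<Rightarrow> real" and S :: "real set"
  assumes fin: "finite_measure \<nu>" and sets: "sets \<nu> = sets borel"
    and q: "0 < q" and \<delta>: "0 < \<delta>" "xs + \<delta> \<le> B"
    and gap_int: "integrable \<nu> (\<lambda>s. indicator {xs<..xs+\<delta>} s * (s - xs) powr (-q))"
    and gap_le: "(\<integral>s. indicator {xs<..xs+\<delta>} s * (s - xs) powr (-q) \<partial>\<nu>) \<le> G"
    and supp: "emeasure \<nu> {B<..} = 0"
    and ptsB: "\<And>j. j \<in> {1..n} \<Longrightarrow> y j \<le> B"
    and ptsgap: "\<And>j. j \<in> {1..n} \<Longrightarrow> xs < y j \<Longrightarrow> xs + \<delta> < y j"
    and n: "0 < n" and fS: "finite S" and BS: "B \<notin> S"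
    and cdf: "\<And>t. xs + \<delta> \<le> t \<Longrightarrow> t \<le> B \<Longrightarrow> t \<notin> S \<Longrightarrow>
        \<bar>real (card {j\<in>{1..n}. xs + \<delta> < y j \<and> y j \<le> t}) / real n - measure \<nu> {xs + \<delta><..t}\<bar> \<le> \<eta>"
  shows "integrable \<nu> (\<lambda>s. indicator {xs<..} s * (s - xs) powr (-q))"
    and "\<bar>(\<Sum>j=1..n. indicator {xs<..} (y j) * (y j - xs) powr (-q)) / real n
          - (\<integral>s. indicator {xs<..} s * (s - xs) powr (-q) \<partial>\<nu>)\<bar> \<le> \<eta> * \<delta> powr (-q) + G"
proof -
  define g where "g = (\<lambda>s::real. (s - xs) powr (-q))"
  define g' where "g' = (\<lambda>s::real. - q * (s - xs) powr (-q - 1))"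
  define a where "a = xs + \<delta>"
  have aB: "a \<le> B" using \<delta> unfolding a_def by simp
  have der: "(g has_real_derivative g' t) (at t)" if "a \<le> t" "t \<le> B" for t
    using DERIV_fun_powr[OF DERIV_diff[OF DERIV_ident DERIV_const], of t xs "-q"] that \<delta>
    unfolding g_def g'_def a_def by simp
  have cont: "continuous_on {a..B} g'"
    unfolding g'_def a_def using \<delta> by (intro continuous_intros) auto
  have neg: "g' t \<le> 0" if "a \<le> t" "t \<le> B" for t
    unfolding g'_def using q by simp
  have gm: "g' \<in> borel_measurable borel" unfolding g'_def by measurable
  have "AE s in \<nu>. s \<notin> {B<..}" using supp sets by (intro AE_not_in) auto
  then have tail: "AE s in \<nu>. indicator {B<..} s * g s = 0" by eventually_elim simp
  have tail_meas: "(\<lambda>s. indicator {B<..} s * g s) \<in> borel_measurable \<nu>"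
    unfolding g_def measurable_cong_sets[OF sets refl] by measurable
  have I3: "integrable \<nu> (\<lambda>s. indicator {B<..} s * g s)"
    and V3: "(\<integral>s. indicator {B<..} s * g s \<partial>\<nu>) = 0"
    using integrable_cong_AE[OF tail_meas _ tail] integral_cong_AE[OF tail_meas _ tail] by auto
  have I2: "integrable \<nu> (\<lambda>s. indicator {a<..B} s * g s)"
    by (rule integral_Ioc_by_parts(1)[OF fin sets aB der cont neg gm])
  have D: "\<bar>(\<Sum>j=1..n. indicator {a<..B} (y j) * g (y j)) / real n - (\<integral>s. indicator {a<..B} s * g s \<partial>\<nu>)\<bar>
      \<le> \<eta> * g a"
    by (rule discrepancy_Ioc_decreasing[OF fin sets aB der cont neg gm _ n fS BS])
       (use cdf in \<open>auto simp: g_def a_def\<close>)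
  have G0: "0 \<le> (\<integral>s. indicator {xs<..a} s * g s \<partial>\<nu>)"
    unfolding g_def by (intro integral_nonneg_AE) auto
  have split: "(\<lambda>s. indicator {xs<..} s * g s)
      = (\<lambda>s. indicator {xs<..a} s * g s + indicator {a<..B} s * g s + indicator {B<..} s * g s)"
    using aB \<delta> unfolding a_def by (auto simp: fun_eq_iff indicator_def)
  show "integrable \<nu> (\<lambda>s. indicator {xs<..} s * (s - xs) powr (-q))"
    using gap_int I2 I3 split unfolding a_def g_def by auto
  have val: "(\<integral>s. indicator {xs<..} s * g s \<partial>\<nu>)
      = (\<integral>s. indicator {xs<..a} s * g s \<partial>\<nu>) + (\<integral>s. indicator {a<..B} s * g s \<partial>\<nu>)"
    unfolding split using gap_int I2 I3 V3 unfolding a_def g_def by simp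
  have sums: "(\<Sum>j=1..n. indicator {xs<..} (y j) * g (y j)) = (\<Sum>j=1..n. indicator {a<..B} (y j) * g (y j))"
    using ptsgap ptsB \<delta> unfolding a_def by (intro sum.cong refl) (auto simp: indicator_def)
  have gap_le': "(\<integral>s. indicator {xs<..a} s * g s \<partial>\<nu>) \<le> G"
    using gap_le unfolding a_def g_def .
  have ga: "g a = \<delta> powr (-q)" unfolding g_def a_def by simp
  have "\<bar>(\<Sum>j=1..n. indicator {xs<..} (y j) * g (y j)) / real n
      - (\<integral>s. indicator {xs<..} s * g s \<partial>\<nu>)\<bar> \<le> \<eta> * \<delta> powr (-q) + G"
    using D G0 gap_le' unfolding sums val ga by linarith
  then show "\<bar>(\<Sum>j=1..n. indicator {xs<..} (y j) * (y j - xs) powr (-q)) / real n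
          - (\<integral>s. indicator {xs<..} s * (s - xs) powr (-q) \<partial>\<nu>)\<bar> \<le> \<eta> * \<delta> powr (-q) + G"
    unfolding g_def .
qed

lemma Ioi_power_discrepancy:
  fixes \<nu> :: "real measure" and y :: "nat \<Rightarrow> nat \<Rightarrow> real" and S :: "nat \<Rightarrow> real set"
    and \<kappa> m0 :: real
  defines "\<delta> \<equiv> \<lambda>n. m0 * real n powr (-1 / (\<kappa> + 1))"
  assumes fin: "finite_measure \<nu>" and sets: "sets \<nu> = sets borel"
    and q: "0 < q" and \<kappa>: "0 < \<kappa> + 1" and m0: "0 < m0" and xsB: "xs < B" and \<rho>: "0 < \<rho>"
    and gap_int: "\<And>d. 0 < d \<Longrightarrow> d \<le> \<rho> \<Longrightarrow>
        integrable \<nu> (\<lambda>s. indicator {xs<..xs+d} s * (s - xs) powr (-q))"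
    and gap_le: "\<And>d. 0 < d \<Longrightarrow> d \<le> \<rho> \<Longrightarrow>
        (\<integral>s. indicator {xs<..xs+d} s * (s - xs) powr (-q) \<partial>\<nu>) \<le> Cg * d powr (\<kappa> + 1 - q)"
    and supp: "emeasure \<nu> {B<..} = 0"
    and ptsB: "\<And>n j. j \<in> {1..n} \<Longrightarrow> y n j \<le> B"
    and ptsgap: "\<And>n j. n \<ge> N0 \<Longrightarrow> j \<in> {1..n} \<Longrightarrow> xs < y n j \<Longrightarrow> xs + \<delta> n < y n j"
    and cdf: "\<And>n t. n \<ge> N0 \<Longrightarrow> xs + \<delta> n \<le> t \<Longrightarrow> t \<le> B \<Longrightarrow> t \<notin> S n \<Longrightarrow>
        \<bar>real (card {j\<in>{1..n}. xs + \<delta> n < y n j \<and> y n j \<le> t}) / real n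
          - measure \<nu> {xs + \<delta> n<..t}\<bar> \<le> 2 * M0 / real n"
    and fS: "\<And>n. finite (S n)" and BS: "\<And>n. B \<notin> S n"
  shows "integrable \<nu> (\<lambda>s. indicator {xs<..} s * (s - xs) powr (-q))"
    and "\<exists>K N. \<forall>n\<ge>N. \<bar>emp_int y n (\<lambda>s. indicator {xs<..} s * (s - xs) powr (-q))
          - (\<integral>s. indicator {xs<..} s * (s - xs) powr (-q) \<partial>\<nu>)\<bar> \<le> K * real n powr (-1 + q / (\<kappa> + 1))"
proof -
  have "eventually (\<lambda>n. \<delta> n \<le> min \<rho> (B - xs)) sequentially"
    unfolding \<delta>_def using \<kappa> \<rho> xsB by (intro eventually_mult_powr_le) auto
  then obtain N1 where N1: "\<And>n. n \<ge> N1 \<Longrightarrow> \<delta> n \<le> min \<rho> (B - xs)"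
    unfolding eventually_sequentially by blast
  define N where "N = max (max N0 N1) 1"
  have bound: "integrable \<nu> (\<lambda>s. indicator {xs<..} s * (s - xs) powr (-q)) \<and>
      \<bar>emp_int y n (\<lambda>s. indicator {xs<..} s * (s - xs) powr (-q))
          - (\<integral>s. indicator {xs<..} s * (s - xs) powr (-q) \<partial>\<nu>)\<bar>
        \<le> 2 * M0 / real n * \<delta> n powr (-q) + Cg * \<delta> n powr (\<kappa> + 1 - q)" if n: "n \<ge> N" for n
  proof -
    have dpos: "0 < \<delta> n" unfolding \<delta>_def using m0 n by (simp add: N_def)
    have dle: "\<delta> n \<le> \<rho>" "xs + \<delta> n \<le> B" using N1[of n] n by (auto simp: N_def)
    show ?thesis
      unfolding emp_int_def using n dpos
      by (intro conjI Ioi_power_discrepancy_le[OF fin sets q dpos dle(2) gap_int gap_le supp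
            ptsB ptsgap _ fS BS cdf] dle(1)) (auto simp: N_def)
  qed
  show "integrable \<nu> (\<lambda>s. indicator {xs<..} s * (s - xs) powr (-q))"
    using bound[of N] by simp
  have "2 * M0 / real n * \<delta> n powr (-q) + Cg * \<delta> n powr (\<kappa> + 1 - q)
      = (2 * M0 * m0 powr (-q) + Cg * m0 powr (\<kappa> + 1 - q)) * real n powr (-1 + q / (\<kappa> + 1))"
    if "0 < n" for n
  proof -
    have "\<delta> n powr (\<kappa> + 1 - q) = m0 powr (\<kappa> + 1 - q) * real n powr (-1 / (\<kappa> + 1) * (\<kappa> + 1 - q))"
      unfolding \<delta>_def using that m0 by (simp add: powr_mult powr_powr)
    also have "-1 / (\<kappa> + 1) * (\<kappa> + 1 - q) = -1 + q / (\<kappa> + 1)"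
      using \<kappa> by (simp add: field_simps)
    finally have gap_term: "\<delta> n powr (\<kappa> + 1 - q) = m0 powr (\<kappa> + 1 - q) * real n powr (-1 + q / (\<kappa> + 1))" .
    have "\<delta> n powr (-q) = m0 powr (-q) * real n powr (q / (\<kappa> + 1))"
      unfolding \<delta>_def using that m0 by (simp add: powr_mult powr_powr)
    then have "2 * M0 / real n * \<delta> n powr (-q) = 2 * M0 * m0 powr (-q) * (real n powr (q / (\<kappa> + 1)) / real n)"
      by simp
    also have "real n powr (q / (\<kappa> + 1)) / real n = real n powr (-1 + q / (\<kappa> + 1))"
      using that by (simp add: powr_diff powr_one)
    finally show ?thesis unfolding gap_term by (simp add: algebra_simps)
  qed
  then show "\<exists>K N. \<forall>n\<ge>N. \<bar>emp_int y n (\<lambda>s. indicator {xs<..} s * (s - xs) powr (-q))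
          - (\<integral>s. indicator {xs<..} s * (s - xs) powr (-q) \<partial>\<nu>)\<bar> \<le> K * real n powr (-1 + q / (\<kappa> + 1))"
    using bound by (metis (no_types, lifting) N_def max.bounded_iff not_one_le_zero le0 neq0_conv)
qed

lemma card_filter_diff:
  fixes A B :: "nat \<Rightarrow> bool"
  assumes "\<And>j. B j \<Longrightarrow> A j"
  shows "real (card {j\<in>{1..n::nat}. A j \<and> \<not> B j})
    = real (card {j\<in>{1..n}. A j}) - real (card {j\<in>{1..n}. B j})"
proof -
  have e: "{j\<in>{1..n::nat}. A j \<and> \<not> B j} = {j\<in>{1..n}. A j} - {j\<in>{1..n}. B j}" by auto
  have s: "{j\<in>{1..n}. B j} \<subseteq> {j\<in>{1..n}. A j}" using assms by auto
  then have "card {j\<in>{1..n}. B j} \<le> card {j\<in>{1..n}. A j}" by (intro card_mono) auto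
  then show ?thesis unfolding e using s by (simp add: card_Diff_subset of_nat_diff)
qed

text \<open>The standing hypotheses, with the constants of Assumptions 1--3 made explicit;
  \<open>near\<close> is what the asymptotics \<open>\<psi> t \<sim> c |t - xs|\<^sup>\<kappa>\<close> give near the edge.\<close>
locale edge_gap_setting =
  fixes x :: "nat \<Rightarrow> nat \<Rightarrow> real" and M :: "real measure" and \<psi> :: "real \<Rightarrow> real"
    and xs c \<kappa> B0 M0 m0 \<rho> :: real and N0 :: nat
  assumes prob: "prob_space M" and dens: "M = density lborel (\<lambda>t. ennreal (\<psi> t))"
    and \<psi>m: "\<psi> \<in> borel_measurable borel" and \<psi>0: "\<And>t. \<psi> t \<ge> 0" and c: "c > 0"
    and bdd: "\<And>n j. j \<in> {1..n} \<Longrightarrow> \<bar>x n j\<bar> \<le> B0"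
    and cdfb: "\<And>n t. n \<ge> N0 \<Longrightarrow> \<bar>emp_cdf x n t - measure M {..t}\<bar> \<le> M0 / real n"
    and N0: "N0 \<ge> 1" and m0: "m0 > 0"
    and gap: "\<And>n j. n \<ge> N0 \<Longrightarrow> j \<in> {1..n} \<Longrightarrow>
        x n j \<notin> {xs - m0 * real n powr (-1/(\<kappa>+1)) .. xs + m0 * real n powr (-1/(\<kappa>+1))}"
    and \<rho>: "\<rho> > 0" and near: "\<And>t. t \<noteq> xs \<Longrightarrow> \<bar>t - xs\<bar> < \<rho> \<Longrightarrow> \<psi> t \<le> 2 * c * \<bar>t - xs\<bar> powr \<kappa>"
    and kappa: "\<kappa> > 2"
begin

lemma sets_M: "sets M = sets borel"
  unfolding dens by simp

lemma space_M: "space M = UNIV"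
  unfolding dens by simp

lemma finite_measure_M: "finite_measure M"
  using prob prob_space.finite_measure by blast

lemma integral_density_le:
  assumes fm: "f \<in> borel_measurable borel" and f0: "\<And>t. 0 \<le> f t" and K: "0 \<le> K"
    and bd: "(\<integral>\<^sup>+t. ennreal (f t * \<psi> t) \<partial>lborel) \<le> ennreal K"
  shows "integrable M f" and "(\<integral>s. f s \<partial>M) \<le> K"
proof -
  have nn: "(\<integral>\<^sup>+s. ennreal (f s) \<partial>M) = (\<integral>\<^sup>+t. ennreal (f t * \<psi> t) \<partial>lborel)"
    unfolding dens using fm \<psi>m
    by (subst nn_integral_density) (auto simp: ennreal_mult'[symmetric] \<psi>0 mult.commute)
  show int: "integrable M f"
  proof (rule integrableI_nonneg)
    show "f \<in> borel_measurable M" unfolding dens using fm by simp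
    show "(\<integral>\<^sup>+s. ennreal (f s) \<partial>M) < \<infinity>"
      unfolding nn infinity_ennreal_def using bd ennreal_less_top[of K] by (rule le_less_trans)
  qed (use f0 in simp)
  have "ennreal (\<integral>s. f s \<partial>M) = (\<integral>\<^sup>+s. ennreal (f s) \<partial>M)"
    using int f0 by (intro nn_integral_eq_integral[symmetric]) auto
  then have "ennreal (\<integral>s. f s \<partial>M) \<le> ennreal K" using nn bd by simp
  then show "(\<integral>s. f s \<partial>M) \<le> K" using K by simp
qed

lemma cdf_eq_1: "measure M {..t} = 1" if "t \<ge> B0"
proof -
  interpret prob_space M by (rule prob)
  have "emp_cdf x n t = 1" if "n \<ge> 1" for n
  proof -
    have "x n j \<le> t" if "j \<in> {1..n}" for j
      using bdd[OF that] \<open>t \<ge> B0\<close> by linarith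
    then have "{j\<in>{1..n}. x n j \<le> t} = {1..n}" by blast
    then show ?thesis unfolding emp_cdf_def using that by simp
  qed
  then have "1 - measure M {..t} \<le> M0 / real n" if "n \<ge> N0" for n
    using cdfb[OF that, of t] N0 that by auto
  then have "1 - measure M {..t} \<le> 0"
    using LIMSEQ_le_const[OF lim_const_over_n[of M0], of "1 - measure M {..t}"] by blast
  then show ?thesis using prob_le_1 by (simp add: antisym)
qed

lemma cdf_eq_0: "measure M {..t} = 0" if "t < - B0"
proof -
  have "emp_cdf x n t = 0" for n
  proof -
    have "\<not> x n j \<le> t" if "j \<in> {1..n}" for j
      using bdd[OF that] \<open>t < - B0\<close> by linarith
    then have "{j\<in>{1..n}. x n j \<le> t} = {}" by blast
    then show ?thesis unfolding emp_cdf_def by simp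
  qed
  then have "measure M {..t} \<le> M0 / real n" if "n \<ge> N0" for n
    using cdfb[OF that, of t] by auto
  then have "measure M {..t} \<le> 0"
    using LIMSEQ_le_const[OF lim_const_over_n[of M0], of "measure M {..t}"] by blast
  then show ?thesis by (simp add: measure_nonneg antisym)
qed

lemma emeasure_greaterThan_eq_0: "emeasure M {B<..} = 0" if "B \<ge> B0"
proof -
  interpret prob_space M by (rule prob)
  have "measure M {B<..} = measure M (space M - {..B})"
    using space_M by (intro arg_cong[where f = "measure M"]) auto
  also have "\<dots> = 0" using prob_compl[of "{..B}"] cdf_eq_1[OF that] by (simp add: sets_M)
  finally show ?thesis by (simp add: emeasure_eq_measure)
qed

lemma measure_singleton_eq_0: "measure M {p} = 0"
proof -
  have "emeasure M {p} = (\<integral>\<^sup>+t. ennreal (\<psi> t) * indicator {p} t \<partial>lborel)"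
    unfolding dens using \<psi>m by (subst emeasure_density) auto
  also have "\<dots> = 0" by (rule nn_integral_null_set) auto
  finally show ?thesis by (simp add: measure_def)
qed

lemma measure_Ioc_eq: "measure M {a<..t} = measure M {..t} - measure M {..a}" if "a \<le> t"
proof -
  interpret finite_measure M by (rule finite_measure_M)
  have "{a<..t} = {..t} - {..a}" by auto
  then show ?thesis using that by (simp add: finite_measure_Diff sets_M)
qed

lemma measure_Ico_eq: "measure M {u..<v} = measure M {..v} - measure M {..u}" if "u \<le> v"
proof -
  interpret finite_measure M by (rule finite_measure_M)
  have lessThan: "measure M {..<w} = measure M {..w}" for w
  proof -
    have "measure M ({..<w} \<union> {w}) = measure M {..<w} + measure M {w}"
      by (rule finite_measure_Union) (auto simp: sets_M)
    moreover have "{..<w} \<union> {w} = {..w}" by auto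
    ultimately show ?thesis using measure_singleton_eq_0[of w] by simp
  qed
  have "measure M ({..<v} - {..<u}) = measure M {..<v} - measure M {..<u}"
    using that by (intro finite_measure_Diff) (auto simp: sets_M)
  moreover have "{..<v} - {..<u} = {u..<v}" by auto
  ultimately show ?thesis by (simp add: lessThan)
qed

lemma B0_nonneg: "0 \<le> B0"
  using bdd[of 1 1] by auto

lemma right_gap_integral_le:
  assumes q: "q < \<kappa> + 1" and d: "0 < d" "d \<le> \<rho> / 2"
  shows "integrable M (\<lambda>s. indicator {xs<..xs+d} s * (s - xs) powr (-q))"
    and "(\<integral>s. indicator {xs<..xs+d} s * (s - xs) powr (-q) \<partial>M) \<le> 2 * c / (\<kappa> + 1 - q) * d powr (\<kappa> + 1 - q)"
proof -
  have bd: "\<psi> t \<le> 2 * c * (t - xs) powr \<kappa>" if "xs < t" "t < xs + \<rho>" for t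
    using near[of t] that by auto
  have bound: "(\<integral>\<^sup>+t. ennreal (indicator {xs<..xs+d} t * (t - xs) powr (-q) * \<psi> t) \<partial>lborel)
      \<le> ennreal (2 * c / (\<kappa> + 1 - q) * d powr (\<kappa> + 1 - q))"
    using d \<rho> by (intro nn_integral_power_singularity_le[OF \<psi>m \<psi>0 c bd q]) auto
  have hm: "(\<lambda>s. indicator {xs<..xs+d} s * (s - xs) powr (-q)) \<in> borel_measurable borel"
    by measurable
  have K0: "0 \<le> 2 * c / (\<kappa> + 1 - q) * d powr (\<kappa> + 1 - q)" using c q by simp
  from integral_density_le[OF hm _ K0 bound]
  show "integrable M (\<lambda>s. indicator {xs<..xs+d} s * (s - xs) powr (-q))"
    and "(\<integral>s. indicator {xs<..xs+d} s * (s - xs) powr (-q) \<partial>M) \<le> 2 * c / (\<kappa> + 1 - q) * d powr (\<kappa> + 1 - q)"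
    by simp_all
qed

lemma left_gap_integral_le:
  assumes q: "q < \<kappa> + 1" and d: "0 < d" "d \<le> \<rho> / 2"
  shows "integrable M (\<lambda>s. indicator {xs-d..<xs} s * (xs - s) powr (-q))"
    and "(\<integral>s. indicator {xs-d..<xs} s * (xs - s) powr (-q) \<partial>M) \<le> 2 * c / (\<kappa> + 1 - q) * d powr (\<kappa> + 1 - q)"
proof -
  define h where "h = (\<lambda>s. indicator {xs-d..<xs} s * (xs - s) powr (-q))"
  have refl: "h (2 * xs + (- 1) * u) * \<psi> (2 * xs + (- 1) * u)
      = indicator {xs<..xs+d} u * (u - xs) powr (-q) * \<psi> (2 * xs - u)" for u
    unfolding h_def by (auto simp: indicator_def)
  have bd: "\<psi> (2 * xs - t) \<le> 2 * c * (t - xs) powr \<kappa>" if "xs < t" "t < xs + \<rho>" for t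
    using near[of "2 * xs - t"] that by auto
  have "(\<integral>\<^sup>+t. ennreal (h t * \<psi> t) \<partial>lborel)
      = ennreal \<bar>- 1\<bar> * (\<integral>\<^sup>+u. ennreal (h (2 * xs + (- 1) * u) * \<psi> (2 * xs + (- 1) * u)) \<partial>lborel)"
    unfolding h_def using \<psi>m by (intro nn_integral_real_affine) auto
  also have "\<dots> = (\<integral>\<^sup>+u. ennreal (indicator {xs<..xs+d} u * (u - xs) powr (-q) * \<psi> (2 * xs - u)) \<partial>lborel)"
    by (simp only: refl abs_minus_cancel abs_one ennreal_1 mult_1)
  also have "\<dots> \<le> ennreal (2 * c / (\<kappa> + 1 - q) * d powr (\<kappa> + 1 - q))"
    using d \<rho> \<psi>m
    by (intro nn_integral_power_singularity_le[where \<phi> = "\<lambda>u. \<psi> (2 * xs - u)", OF _ \<psi>0 c bd q]) auto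
  finally have bound: "(\<integral>\<^sup>+t. ennreal (h t * \<psi> t) \<partial>lborel)
      \<le> ennreal (2 * c / (\<kappa> + 1 - q) * d powr (\<kappa> + 1 - q))" .
  have hm: "h \<in> borel_measurable borel" unfolding h_def by measurable
  have h0: "0 \<le> h t" for t unfolding h_def by simp
  have K0: "0 \<le> 2 * c / (\<kappa> + 1 - q) * d powr (\<kappa> + 1 - q)" using c q by simp
  from integral_density_le[OF hm h0 K0 bound]
  show "integrable M (\<lambda>s. indicator {xs-d..<xs} s * (xs - s) powr (-q))"
    and "(\<integral>s. indicator {xs-d..<xs} s * (xs - s) powr (-q) \<partial>M) \<le> 2 * c / (\<kappa> + 1 - q) * d powr (\<kappa> + 1 - q)"
    unfolding h_def .
qed

end

context edge_gap_setting
begin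

lemma count_Ioc_discrepancy:
  assumes n: "n \<ge> N0" and at: "a \<le> t"
  shows "\<bar>real (card {j\<in>{1..n}. a < x n j \<and> x n j \<le> t}) / real n - measure M {a<..t}\<bar> \<le> 2 * M0 / real n"
proof -
  have "{j\<in>{1..n}. a < x n j \<and> x n j \<le> t} = {j\<in>{1..n}. x n j \<le> t \<and> \<not> x n j \<le> a}" by auto
  then have "real (card {j\<in>{1..n}. a < x n j \<and> x n j \<le> t}) / real n = emp_cdf x n t - emp_cdf x n a"
    using card_filter_diff[of "\<lambda>j. x n j \<le> a" "\<lambda>j. x n j \<le> t" n] at
    unfolding emp_cdf_def by (auto simp: diff_divide_distrib)
  then show ?thesis
    using measure_Ioc_eq[OF at] cdfb[OF n, of t] cdfb[OF n, of a] by simp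
qed

lemma count_Ico_discrepancy:
  assumes n: "n \<ge> N0" and uw: "u \<le> w" and pts: "\<And>j. j \<in> {1..n} \<Longrightarrow> x n j \<noteq> u \<and> x n j \<noteq> w"
  shows "\<bar>real (card {j\<in>{1..n}. u \<le> x n j \<and> x n j < w}) / real n - measure M {u..<w}\<bar> \<le> 2 * M0 / real n"
proof -
  have "{j\<in>{1..n}. u \<le> x n j \<and> x n j < w} = {j\<in>{1..n}. x n j \<le> w \<and> \<not> x n j \<le> u}"
    using pts by force
  then have "real (card {j\<in>{1..n}. u \<le> x n j \<and> x n j < w}) / real n = emp_cdf x n w - emp_cdf x n u"
    using card_filter_diff[of "\<lambda>j. x n j \<le> u" "\<lambda>j. x n j \<le> w" n] uw
    unfolding emp_cdf_def by (auto simp: diff_divide_distrib)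
  then show ?thesis
    using measure_Ico_eq[OF uw] cdfb[OF n, of w] cdfb[OF n, of u] by simp
qed

lemma reflected_count_discrepancy:
  assumes n: "n \<ge> N0" and d: "d = m0 * real n powr (-1 / (\<kappa> + 1))" and t: "xs + d \<le> t"
    and pts: "\<And>j. j \<in> {1..n} \<Longrightarrow> x n j \<noteq> 2 * xs - t"
  shows "\<bar>real (card {j\<in>{1..n}. xs + d < 2 * xs - x n j \<and> 2 * xs - x n j \<le> t}) / real n
      - measure M {2 * xs - t..<xs - d}\<bar> \<le> 2 * M0 / real n"
proof -
  have "{j\<in>{1..n}. xs + d < 2 * xs - x n j \<and> 2 * xs - x n j \<le> t}
      = {j\<in>{1..n}. 2 * xs - t \<le> x n j \<and> x n j < xs - d}" by auto
  moreover have "x n j \<noteq> xs - d" if "j \<in> {1..n}" for j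
    using gap[OF n that] m0 unfolding d by auto
  ultimately show ?thesis
    using count_Ico_discrepancy[OF n, of "2 * xs - t" "xs - d"] pts t by simp
qed

lemma right_power_discrepancy:
  assumes q: "0 < q" "q < \<kappa> + 1"
  shows "integrable M (\<lambda>s. indicator {xs<..} s * (s - xs) powr (-q))"
    and "\<exists>K N. \<forall>n\<ge>N. \<bar>emp_int x n (\<lambda>s. indicator {xs<..} s * (s - xs) powr (-q))
          - (\<integral>s. indicator {xs<..} s * (s - xs) powr (-q) \<partial>M)\<bar> \<le> K * real n powr (-1 + q / (\<kappa> + 1))"
proof -
  define B where "B = B0 + 2 * \<bar>xs\<bar> + 1"
  have xsB: "xs < B" unfolding B_def using B0_nonneg by linarith
  have supp: "emeasure M {B<..} = 0"
    using B0_nonneg by (intro emeasure_greaterThan_eq_0) (simp add: B_def)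
  have ptsB: "x n j \<le> B" if "j \<in> {1..n}" for n j
    using bdd[OF that] unfolding B_def by linarith
  have ptsgap: "xs + m0 * real n powr (-1 / (\<kappa> + 1)) < x n j"
    if "n \<ge> N0" "j \<in> {1..n}" "xs < x n j" for n j
    using gap[OF that(1,2)] that(3) m0 by auto
  have cdf: "\<bar>real (card {j\<in>{1..n}. xs + m0 * real n powr (-1 / (\<kappa> + 1)) < x n j \<and> x n j \<le> t}) / real n
        - measure M {xs + m0 * real n powr (-1 / (\<kappa> + 1))<..t}\<bar> \<le> 2 * M0 / real n"
    if "n \<ge> N0" "xs + m0 * real n powr (-1 / (\<kappa> + 1)) \<le> t" "t \<le> B" "t \<notin> {}" for n t
    by (rule count_Ioc_discrepancy[OF that(1,2)])
  note Ioi = Ioi_power_discrepancy[where S = "\<lambda>_. {}" and \<rho> = "\<rho> / 2",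
      OF finite_measure_M sets_M q(1) _ m0 xsB _ right_gap_integral_le[OF q(2)]
      supp ptsB ptsgap cdf]
  show "integrable M (\<lambda>s. indicator {xs<..} s * (s - xs) powr (-q))"
    using Ioi(1) kappa \<rho> by simp
  show "\<exists>K N. \<forall>n\<ge>N. \<bar>emp_int x n (\<lambda>s. indicator {xs<..} s * (s - xs) powr (-q))
          - (\<integral>s. indicator {xs<..} s * (s - xs) powr (-q) \<partial>M)\<bar> \<le> K * real n powr (-1 + q / (\<kappa> + 1))"
    using Ioi(2) kappa \<rho> by simp
qed

text \<open>The reflection \<open>s \<mapsto> 2 xs - s\<close> reduces this to \<open>Ioi_power_discrepancy\<close> for the
  image measure.\<close>
lemma left_power_discrepancy:
  assumes q: "0 < q" "q < \<kappa> + 1"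
  shows "integrable M (\<lambda>s. indicator {..<xs} s * (xs - s) powr (-q))"
    and "\<exists>K N. \<forall>n\<ge>N. \<bar>emp_int x n (\<lambda>s. indicator {..<xs} s * (xs - s) powr (-q))
          - (\<integral>s. indicator {..<xs} s * (xs - s) powr (-q) \<partial>M)\<bar> \<le> K * real n powr (-1 + q / (\<kappa> + 1))"
proof -
  define B where "B = B0 + 2 * \<bar>xs\<bar> + 1"
  define r where "r = (\<lambda>s::real. 2 * xs - s)"
  define \<nu> where "\<nu> = distr M borel r"
  define y where "y = (\<lambda>n j. r (x n j))"
  define S where "S = (\<lambda>n. y n ` {1..n})"
  have rM: "r \<in> measurable M borel" unfolding dens r_def by simp
  have xsB: "xs < B" unfolding B_def using B0_nonneg by linarith
  have fin: "finite_measure \<nu>"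
    unfolding \<nu>_def using finite_measure.finite_measure_distr[OF finite_measure_M rM] .
  have sets: "sets \<nu> = sets borel" unfolding \<nu>_def by simp
  have reflect: "integrable \<nu> f \<longleftrightarrow> integrable M (\<lambda>s. f (r s))" "(\<integral>s. f s \<partial>\<nu>) = (\<integral>s. f (r s) \<partial>M)"
    if "f \<in> borel_measurable borel" for f :: "real \<Rightarrow> real"
    unfolding \<nu>_def using integrable_distr_eq[OF rM that] integral_distr[OF rM that] by auto
  have gap_r: "(\<lambda>s. indicator {xs<..xs+d} (r s) * (r s - xs) powr (-q))
      = (\<lambda>s. indicator {xs-d..<xs} s * (xs - s) powr (-q))" for d
    unfolding r_def by (auto simp: fun_eq_iff indicator_def)
  have gap_int: "integrable \<nu> (\<lambda>s. indicator {xs<..xs+d} s * (s - xs) powr (-q))"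
    and gap_le: "(\<integral>s. indicator {xs<..xs+d} s * (s - xs) powr (-q) \<partial>\<nu>) \<le> 2 * c / (\<kappa> + 1 - q) * d powr (\<kappa> + 1 - q)"
    if "0 < d" "d \<le> \<rho> / 2" for d
    using left_gap_integral_le[OF q(2) that] reflect[of "\<lambda>s. indicator {xs<..xs+d} s * (s - xs) powr (-q)"]
    unfolding gap_r by auto
  have supp: "emeasure \<nu> {B<..} = 0"
  proof -
    have "emeasure \<nu> {B<..} = emeasure M (r -` {B<..} \<inter> space M)"
      unfolding \<nu>_def by (rule emeasure_distr[OF rM]) simp
    also have "\<dots> \<le> emeasure M {..2 * xs - B}"
      by (intro emeasure_mono) (auto simp: r_def sets_M)
    also have "\<dots> = 0"
      using cdf_eq_0[of "2 * xs - B"] finite_measure_M unfolding B_def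
      by (simp add: finite_measure.emeasure_eq_measure)
    finally show ?thesis by simp
  qed
  have ptsB: "y n j \<le> B" if "j \<in> {1..n}" for n j
    using bdd[OF that] unfolding B_def y_def r_def by linarith
  have ptsgap: "xs + m0 * real n powr (-1 / (\<kappa> + 1)) < y n j"
    if "n \<ge> N0" "j \<in> {1..n}" "xs < y n j" for n j
    using gap[OF that(1,2)] that(3) m0 unfolding y_def r_def by auto
  have measure_\<nu>: "measure \<nu> {xs + d<..t} = measure M {2 * xs - t..<xs - d}" for d t
  proof -
    have "r -` {xs + d<..t} \<inter> space M = {2 * xs - t..<xs - d}"
      unfolding r_def space_M by auto
    then show ?thesis unfolding \<nu>_def by (simp add: measure_distr[OF rM])
  qed
  have cdf: "\<bar>real (card {j\<in>{1..n}. xs + d < y n j \<and> y n j \<le> t}) / real n - measure \<nu> {xs + d<..t}\<bar>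
      \<le> 2 * M0 / real n"
    if n: "n \<ge> N0" and t: "xs + d \<le> t" "t \<le> B" "t \<notin> S n"
    and d: "d = m0 * real n powr (-1 / (\<kappa> + 1))" for n d t
    unfolding y_def r_def measure_\<nu>
  proof (rule reflected_count_discrepancy[OF n d t(1)])
    show "x n j \<noteq> 2 * xs - t" if "j \<in> {1..n}" for j
    proof
      assume "x n j = 2 * xs - t"
      then have "t = y n j" unfolding y_def r_def by simp
      then show False using t(3) that unfolding S_def by auto
    qed
  qed
  have fS: "finite (S n)" for n unfolding S_def by simp
  have BS: "B \<notin> S n" for n
  proof
    assume "B \<in> S n"
    then obtain j where "j \<in> {1..n}" "B = 2 * xs - x n j" unfolding S_def y_def r_def by auto
    then show False using bdd[of j n] unfolding B_def by linarith
  qed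
  note Ioi = Ioi_power_discrepancy[where \<rho> = "\<rho> / 2",
      OF fin sets q(1) _ m0 xsB _ gap_int gap_le supp ptsB ptsgap cdf[OF _ _ _ _ refl] fS BS]
  have f_r: "(\<lambda>s. indicator {xs<..} (r s) * (r s - xs) powr (-q)) = (\<lambda>s. indicator {..<xs} s * (xs - s) powr (-q))"
    unfolding r_def by (auto simp: fun_eq_iff indicator_def)
  have fm: "(\<lambda>s. indicator {xs<..} s * (s - xs) powr (-q)) \<in> borel_measurable borel" by measurable
  show "integrable M (\<lambda>s. indicator {..<xs} s * (xs - s) powr (-q))"
    using Ioi(1) reflect(1)[OF fm] kappa \<rho> unfolding f_r by simp
  have "emp_int y n (\<lambda>s. indicator {xs<..} s * (s - xs) powr (-q))
      = emp_int x n (\<lambda>s. indicator {..<xs} s * (xs - s) powr (-q))" for n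
    unfolding emp_int_def y_def using f_r by (simp add: fun_eq_iff)
  then show "\<exists>K N. \<forall>n\<ge>N. \<bar>emp_int x n (\<lambda>s. indicator {..<xs} s * (xs - s) powr (-q))
          - (\<integral>s. indicator {..<xs} s * (xs - s) powr (-q) \<partial>M)\<bar> \<le> K * real n powr (-1 + q / (\<kappa> + 1))"
    using Ioi(2) reflect(2)[OF fm] kappa \<rho> unfolding f_r by simp
qed

end

lemma emp_int_add: "emp_int x n (\<lambda>s. f s + g s) = emp_int x n f + emp_int x n g"
  unfolding emp_int_def by (simp add: sum.distrib add_divide_distrib)

lemma emp_int_mult_left: "emp_int x n (\<lambda>s. a * f s) = a * emp_int x n f"
  unfolding emp_int_def by (simp add: sum_distrib_left)

lemma inverse_power_split:
  fixes xs s :: real and k :: nat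
  assumes k: "k \<ge> 1"
  shows "1 / (xs - s)^k = indicator {..<xs} s * (xs - s) powr (- real k)
           + (-1)^k * (indicator {xs<..} s * (s - xs) powr (- real k))"
proof (cases s xs rule: linorder_cases)
  case less
  then show ?thesis by (simp add: powr_minus powr_realpow divide_inverse)
next
  case equal
  then show ?thesis using k by simp
next
  case greater
  have "(xs - s)^k = (-1)^k * (s - xs)^k" by (metis minus_diff_eq power_minus)
  then have "1 / (xs - s)^k = (1 / (-1)^k) * (1 / (s - xs)^k)" by simp
  also have "1 / (-1::real)^k = (-1)^k" by (simp add: power_one_over[symmetric])
  also have "1 / (s - xs)^k = (s - xs) powr (- real k)"
    using greater by (simp add: powr_minus powr_realpow divide_inverse)
  finally show ?thesis using greater by simp
qed

lemma abs_powr_split: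
  fixes xs s q :: real
  shows "\<bar>xs - s\<bar> powr (- q) = indicator {..<xs} s * (xs - s) powr (- q) + indicator {xs<..} s * (s - xs) powr (- q)"
  by (cases "s < xs"; cases "s = xs") (auto simp: indicator_def abs_if)

context edge_gap_setting
begin

lemma inverse_power_discrepancy:
  assumes k: "1 \<le> k" "real k < \<kappa> + 1"
  shows "integrable M (\<lambda>s. 1 / (xs - s)^k)"
    and "\<exists>K N. \<forall>n\<ge>N. \<bar>emp_int x n (\<lambda>s. 1 / (xs - s)^k) - (\<integral>s. 1 / (xs - s)^k \<partial>M)\<bar>
          \<le> K * real n powr (-1 + k / (\<kappa> + 1))"
proof -
  have q: "0 < real k" "real k < \<kappa> + 1" using k by auto
  define fL where "fL = (\<lambda>s. indicator {..<xs} s * (xs - s) powr (- real k))"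
  define fR where "fR = (\<lambda>s. indicator {xs<..} s * (s - xs) powr (- real k))"
  have split: "(\<lambda>s. 1 / (xs - s)^k) = (\<lambda>s. fL s + (-1)^k * fR s)"
    unfolding fL_def fR_def using inverse_power_split[OF k(1)] by (simp add: fun_eq_iff)
  have iL: "integrable M fL" and iR: "integrable M fR"
    unfolding fL_def fR_def using left_power_discrepancy(1)[OF q] right_power_discrepancy(1)[OF q] .
  show "integrable M (\<lambda>s. 1 / (xs - s)^k)" unfolding split using iL iR by simp
  obtain KL NL where KL: "\<And>n. n \<ge> NL \<Longrightarrow>
      \<bar>emp_int x n fL - (\<integral>s. fL s \<partial>M)\<bar> \<le> KL * real n powr (-1 + k / (\<kappa> + 1))"
    using left_power_discrepancy(2)[OF q] unfolding fL_def by blast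
  obtain KR NR where KR: "\<And>n. n \<ge> NR \<Longrightarrow>
      \<bar>emp_int x n fR - (\<integral>s. fR s \<partial>M)\<bar> \<le> KR * real n powr (-1 + k / (\<kappa> + 1))"
    using right_power_discrepancy(2)[OF q] unfolding fR_def by blast
  have diff: "emp_int x n (\<lambda>s. 1 / (xs - s)^k) - (\<integral>s. 1 / (xs - s)^k \<partial>M)
      = (emp_int x n fL - (\<integral>s. fL s \<partial>M)) + (-1)^k * (emp_int x n fR - (\<integral>s. fR s \<partial>M))" for n
    unfolding split emp_int_add emp_int_mult_left using iL iR by (simp add: algebra_simps)
  have "\<bar>emp_int x n (\<lambda>s. 1 / (xs - s)^k) - (\<integral>s. 1 / (xs - s)^k \<partial>M)\<bar>
      \<le> (KL + KR) * real n powr (-1 + k / (\<kappa> + 1))" if "n \<ge> max NL NR" for n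
  proof -
    have "\<bar>(-1::real)^k * (emp_int x n fR - (\<integral>s. fR s \<partial>M))\<bar> = \<bar>emp_int x n fR - (\<integral>s. fR s \<partial>M)\<bar>"
      by (simp add: abs_mult power_abs)
    moreover have "NL \<le> n" "NR \<le> n" using that by auto
    ultimately show ?thesis
      unfolding diff distrib_right using KL[of n] KR[of n]
        abs_triangle_ineq[of "emp_int x n fL - (\<integral>s. fL s \<partial>M)" "(-1)^k * (emp_int x n fR - (\<integral>s. fR s \<partial>M))"]
      by linarith
  qed
  then show "\<exists>K N. \<forall>n\<ge>N. \<bar>emp_int x n (\<lambda>s. 1 / (xs - s)^k) - (\<integral>s. 1 / (xs - s)^k \<partial>M)\<bar>
      \<le> K * real n powr (-1 + k / (\<kappa> + 1))" by blast
qed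

lemma emp_int_abs_powr_bounded:
  assumes q: "0 < q" "q < \<kappa> + 1"
  shows "\<exists>A N. \<forall>n\<ge>N. emp_int x n (\<lambda>s. \<bar>xs - s\<bar> powr (- q)) \<le> A"
proof -
  define fL where "fL = (\<lambda>s. indicator {..<xs} s * (xs - s) powr (- q))"
  define fR where "fR = (\<lambda>s. indicator {xs<..} s * (s - xs) powr (- q))"
  obtain KL NL where KL: "\<And>n. n \<ge> NL \<Longrightarrow>
      \<bar>emp_int x n fL - (\<integral>s. fL s \<partial>M)\<bar> \<le> KL * real n powr (-1 + q / (\<kappa> + 1))"
    using left_power_discrepancy(2)[OF q] unfolding fL_def by blast
  obtain KR NR where KR: "\<And>n. n \<ge> NR \<Longrightarrow>
      \<bar>emp_int x n fR - (\<integral>s. fR s \<partial>M)\<bar> \<le> KR * real n powr (-1 + q / (\<kappa> + 1))"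
    using right_power_discrepancy(2)[OF q] unfolding fR_def by blast
  have small: "K * real n powr (-1 + q / (\<kappa> + 1)) \<le> \<bar>K\<bar>" if "n \<ge> 1" for K n
  proof -
    have "-1 + q / (\<kappa> + 1) \<le> 0" using q kappa by (simp add: divide_le_eq)
    then have "real n powr (-1 + q / (\<kappa> + 1)) \<le> real n powr 0"
      using that by (intro powr_mono) auto
    then have "real n powr (-1 + q / (\<kappa> + 1)) \<le> 1" using that by simp
    then have "\<bar>K\<bar> * real n powr (-1 + q / (\<kappa> + 1)) \<le> \<bar>K\<bar>" by (simp add: mult_left_le)
    moreover have "K * real n powr (-1 + q / (\<kappa> + 1)) \<le> \<bar>K\<bar> * real n powr (-1 + q / (\<kappa> + 1))"
      by (simp add: mult_right_mono)
    ultimately show ?thesis by linarith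
  qed
  have "emp_int x n (\<lambda>s. \<bar>xs - s\<bar> powr (- q)) \<le> (\<integral>s. fL s \<partial>M) + (\<integral>s. fR s \<partial>M) + \<bar>KL\<bar> + \<bar>KR\<bar>"
    if "n \<ge> max (max NL NR) 1" for n
  proof -
    have "emp_int x n (\<lambda>s. \<bar>xs - s\<bar> powr (- q)) = emp_int x n fL + emp_int x n fR"
      unfolding fL_def fR_def abs_powr_split emp_int_add ..
    then show ?thesis using KL[of n] KR[of n] small[of n KL] small[of n KR] that by simp
  qed
  then show ?thesis by blast
qed

end

lemma has_field_derivative_inverse_sub:
  fixes c w :: complex
  assumes "w \<noteq> c"
  shows "((\<lambda>w. 1 / (w - c)) has_field_derivative (- 1 / (w - c)^2)) (at w)"
  using assms by (auto intro!: derivative_eq_intros simp: power2_eq_square field_simps)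

lemma inverse_add_taylor3:
  fixes u v :: complex
  assumes "v \<noteq> 0" "u + v \<noteq> 0"
  shows "1 / (u + v) = 1 / v - u / v^2 + u^2 / v^3 - u^3 / (v^3 * (u + v))"
proof -
  have t: "1 / w = 1 / v - (w - v) / v^2 + (w - v)^2 / v^3 - (w - v)^3 / (v^3 * w)" if "v \<noteq> 0" "w \<noteq> 0" for w v :: complex
    using that by (simp add: field_simps eval_nat_numeral)
  show ?thesis using t[OF assms(1,2)] by simp
qed

lemma norm_taylor3_remainder_le:
  fixes u v :: complex
  assumes "cmod u \<le> cmod v / 2" "v \<noteq> 0"
  shows "cmod (u^3 / (v^3 * (u + v))) \<le> 2 * cmod u ^ 3 / cmod v ^ 4"
proof -
  have uv: "cmod v / 2 \<le> cmod (u + v)"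
    using norm_triangle_ineq2[of v "-u"] assms(1) by (simp add: add.commute norm_minus_commute)
  have pos: "0 < cmod v" using assms by simp
  have "cmod (u^3 / (v^3 * (u + v))) = cmod u ^ 3 / (cmod v ^ 3 * cmod (u + v))"
    by (simp add: norm_divide norm_mult norm_power)
  also have "\<dots> \<le> cmod u ^ 3 / (cmod v ^ 3 * (cmod v / 2))"
    using uv pos by (intro divide_left_mono mult_left_mono mult_pos_pos) auto
  also have "\<dots> = 2 * cmod u ^ 3 / cmod v ^ 4" using pos by (simp add: field_simps eval_nat_numeral)
  finally show ?thesis .
qed

lemma norm_inverse_cube_diff_le:
  fixes u v :: complex
  assumes "cmod u \<le> cmod v / 2" "v \<noteq> 0"
  shows "cmod (1 / (u + v)^3 - 1 / v^3) \<le> 40 * cmod u / cmod v ^ 4"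
proof -
  have uv: "cmod v / 2 \<le> cmod (u + v)"
    using norm_triangle_ineq2[of v "-u"] assms(1) by (simp add: add.commute norm_minus_commute)
  have pos: "0 < cmod v" using assms by simp
  have uv0: "u + v \<noteq> 0" using uv pos by auto
  have t: "1 / w^3 - 1 / v^3 = - ((w-v) * (3 * v^2 + 3 * (w-v) * v + (w-v)^2)) / (w^3 * v^3)"
    if "v \<noteq> 0" "w \<noteq> 0" for w v :: complex
    using that apply (simp add: divide_simps) by algebra
  have eq: "1 / (u + v)^3 - 1 / v^3 = - (u * (3 * v^2 + 3 * u * v + u^2)) / ((u + v)^3 * v^3)"
    using t[OF assms(2) uv0] by simp
  have num: "cmod (u * (3 * v^2 + 3 * u * v + u^2)) \<le> cmod u * (5 * cmod v ^ 2)"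
  proof -
    have "cmod (3 * v^2 + 3 * u * v + u^2) \<le> 3 * cmod v ^ 2 + 3 * cmod u * cmod v + cmod u ^ 2"
      by (rule order_trans[OF norm_triangle_ineq] order_trans[OF add_mono[OF norm_triangle_ineq order_refl]])+
         (simp_all add: norm_mult norm_power)
    also have "\<dots> \<le> 5 * cmod v ^ 2"
    proof -
      have "cmod u * cmod v \<le> cmod v / 2 * cmod v" using assms(1) by (intro mult_right_mono) auto
      then have h1: "3 * cmod u * cmod v \<le> 3 / 2 * cmod v ^ 2" by (simp add: power2_eq_square)
      have "cmod u ^ 2 \<le> (cmod v / 2) ^ 2" using assms(1) by (intro power_mono) auto
      then have h2: "cmod u ^ 2 \<le> cmod v ^ 2 / 4" by (simp add: power_divide)
      have "3 * cmod v ^ 2 + 3 * cmod u * cmod v + cmod u ^ 2 \<le> 3 * cmod v ^ 2 + 3 / 2 * cmod v ^ 2 + cmod v ^ 2 / 4"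
        by (intro add_mono order_refl h1 h2)
      also have "\<dots> \<le> 5 * cmod v ^ 2" by simp
      finally show "3 * cmod v ^ 2 + 3 * cmod u * cmod v + cmod u ^ 2 \<le> 5 * cmod v ^ 2" .
    qed
    finally show ?thesis by (simp add: norm_mult mult_left_mono)
  qed
  have den: "cmod v ^ 3 * cmod v ^ 3 / 8 \<le> cmod ((u + v)^3 * v^3)"
  proof -
    have "(cmod v / 2) ^ 3 \<le> cmod (u + v) ^ 3" using uv pos by (intro power_mono) auto
    then have "cmod v ^ 3 / 8 \<le> cmod (u + v) ^ 3" by (simp add: power_divide)
    then have "cmod v ^ 3 * (cmod v ^ 3 / 8) \<le> cmod v ^ 3 * cmod (u + v) ^ 3"
      by (intro mult_left_mono) auto
    then show ?thesis by (simp add: norm_mult norm_power mult.commute)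
  qed
  have "cmod (1 / (u + v)^3 - 1 / v^3) = cmod (u * (3 * v^2 + 3 * u * v + u^2)) / cmod ((u + v)^3 * v^3)"
    unfolding eq by (simp add: norm_divide)
  also have "\<dots> \<le> (cmod u * (5 * cmod v ^ 2)) / (cmod v ^ 3 * cmod v ^ 3 / 8)"
    using num den pos by (intro frac_le) auto
  also have "\<dots> = 40 * cmod u / cmod v ^ 4" using pos by (simp add: field_simps eval_nat_numeral)
  finally show ?thesis .
qed

lemma inverse_pow4_le_powr:
  fixes v \<delta> p :: real
  assumes "0 < \<delta>" "\<delta> \<le> \<bar>v\<bar>" "p \<le> 1"
  shows "1 / \<bar>v\<bar> ^ 4 \<le> \<delta> powr (p - 1) * \<bar>v\<bar> powr (- (3 + p))"
proof -
  have v: "0 < \<bar>v\<bar>" using assms by simp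
  have "1 / \<bar>v\<bar> ^ 4 = \<bar>v\<bar> powr (p - 1) * \<bar>v\<bar> powr (- (3 + p))"
    using v by (simp add: powr_add[symmetric] powr_minus powr_realpow divide_inverse)
  also have "\<dots> \<le> \<delta> powr (p - 1) * \<bar>v\<bar> powr (- (3 + p))"
    using assms by (intro mult_right_mono powr_mono2') auto
  finally show ?thesis .
qed

lemma has_field_derivative_inverse_square:
  fixes c w :: complex
  assumes "w \<noteq> c"
  shows "((\<lambda>w. - 1 / (w - c)^2) has_field_derivative (2 / (w - c)^3)) (at w)"
proof -
  have d: "w - c \<noteq> 0" using assms by simp
  have A: "((\<lambda>w. - ((1 / (w - c))^2)) has_field_derivative - (of_nat 2 * ((- 1 / (w - c)^2) * (1 / (w - c))^(2 - Suc 0)))) (at w)"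
    by (rule DERIV_minus[OF DERIV_power[OF has_field_derivative_inverse_sub[OF assms]]])
  have f: "(\<lambda>w. - ((1 / (w - c))^2)) = (\<lambda>w. - 1 / (w - c)^2)" by (simp add: power_one_over fun_eq_iff)
  have h: "- (of_nat 2 * ((- 1 / h^2) * (1 / h)^(2 - Suc 0))) = 2 / h^3" if "h \<noteq> 0" for h :: complex
    using that by (simp add: field_simps eval_nat_numeral)
  show ?thesis using A unfolding f h[OF d] .
qed

lemma deriv2_emp_stieltjes:
  fixes x :: "nat \<Rightarrow> nat \<Rightarrow> real" and z :: complex
  assumes pts: "\<And>j. j \<in> {1..n} \<Longrightarrow> z \<noteq> complex_of_real (x n j)"
  shows "deriv (deriv (emp_stieltjes x n)) z = 2 * (\<Sum>j=1..n. 1 / (z - complex_of_real (x n j))^3) / of_nat n"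
proof -
  define U where "U = - ((\<lambda>j. complex_of_real (x n j)) ` {1..n})"
  have "open U" unfolding U_def by (intro open_Compl finite_imp_closed) auto
  have zU: "z \<in> U" unfolding U_def using pts by blast
  have ne: "w \<noteq> complex_of_real (x n j)" if "w \<in> U" "j \<in> {1..n}" for w j
    using that unfolding U_def by auto
  define D1 where "D1 = (\<lambda>w. (\<Sum>j=1..n. - 1 / (w - complex_of_real (x n j))^2) / of_nat n)"
  have d1: "(emp_stieltjes x n has_field_derivative D1 w) (at w)" if "w \<in> U" for w
    unfolding D1_def emp_stieltjes_def[abs_def] using ne[OF that]
    by (intro DERIV_cdivide DERIV_sum has_field_derivative_inverse_sub) auto
  have "eventually (\<lambda>w. w \<in> U) (nhds z)" using \<open>open U\<close> zU by (rule eventually_nhds_in_open)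
  then have "eventually (\<lambda>w. deriv (emp_stieltjes x n) w = D1 w) (nhds z)"
    by eventually_elim (rule DERIV_imp_deriv[OF d1])
  then have "deriv (deriv (emp_stieltjes x n)) z = deriv D1 z" by (rule deriv_cong_ev) simp
  also have "\<dots> = (\<Sum>j=1..n. 2 / (z - complex_of_real (x n j))^3) / of_nat n"
    unfolding D1_def using ne[OF zU]
    by (intro DERIV_imp_deriv DERIV_cdivide DERIV_sum has_field_derivative_inverse_square) auto
  finally show ?thesis by (simp add: sum_distrib_left)
qed

lemma sum_inverse_add_taylor3:
  fixes u :: complex and v :: "nat \<Rightarrow> complex"
  assumes "\<And>j. j \<in> J \<Longrightarrow> v j \<noteq> 0" "\<And>j. j \<in> J \<Longrightarrow> u + v j \<noteq> 0"
  shows "(\<Sum>j\<in>J. 1 / (u + v j)) = (\<Sum>j\<in>J. 1 / v j) - u * (\<Sum>j\<in>J. 1 / (v j)^2)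
           + u^2 * (\<Sum>j\<in>J. 1 / (v j)^3) - (\<Sum>j\<in>J. u^3 / ((v j)^3 * (u + v j)))"
proof -
  have "(\<Sum>j\<in>J. 1 / (u + v j)) = (\<Sum>j\<in>J. 1 / v j - u / (v j)^2 + u^2 / (v j)^3 - u^3 / ((v j)^3 * (u + v j)))"
    using inverse_add_taylor3 assms by (intro sum.cong) auto
  then show ?thesis by (simp add: sum.distrib sum_subtractf sum_distrib_left)
qed

lemma add_nonzero_if_norm_le_half:
  fixes u v :: complex
  assumes "cmod u \<le> cmod v / 2" "v \<noteq> 0"
  shows "u + v \<noteq> 0"
proof
  assume "u + v = 0"
  then have "cmod u = cmod v" by (metis add_eq_0_iff norm_minus_cancel)
  then show False using assms by simp
qed

lemma mult_powr_le_powr: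
  fixes n c K a b T :: real
  assumes "1 \<le> n" "0 \<le> c" "0 \<le> K" "a + b \<le> T"
  shows "c * n powr a * (K * n powr b) \<le> c * K * n powr T"
proof -
  have "c * n powr a * (K * n powr b) = c * K * n powr (a + b)" by (simp add: powr_add mult_ac)
  also have "\<dots> \<le> c * K * n powr T" using assms by (intro mult_left_mono powr_mono) auto
  finally show ?thesis .
qed

lemma emp_stieltjes_taylor_error_le:
  fixes x :: "nat \<Rightarrow> nat \<Rightarrow> real" and z :: complex and I1 I2 I3 r :: real
  assumes n: "0 < n" and z: "cmod (z - complex_of_real xs) \<le> r"
    and far: "\<And>j. j \<in> {1..n} \<Longrightarrow> 2 * r \<le> \<bar>xs - x n j\<bar>" "\<And>j. j \<in> {1..n} \<Longrightarrow> x n j \<noteq> xs"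
  shows "cmod (emp_stieltjes x n z - (complex_of_real I1 - complex_of_real I2 * (z - complex_of_real xs)
            + complex_of_real I3 * (z - complex_of_real xs)^2))
    \<le> \<bar>emp_int x n (\<lambda>s. 1 / (xs - s)) - I1\<bar> + r * \<bar>emp_int x n (\<lambda>s. 1 / (xs - s)^2) - I2\<bar>
      + r^2 * \<bar>emp_int x n (\<lambda>s. 1 / (xs - s)^3) - I3\<bar> + 2 * r^3 * emp_int x n (\<lambda>s. 1 / \<bar>xs - s\<bar>^4)"
proof -
  define u where "u = z - complex_of_real xs"
  define v where "v = (\<lambda>j. complex_of_real (xs - x n j))"
  define E where "E = (\<lambda>k::nat. emp_int x n (\<lambda>s. 1 / (xs - s)^k))"
  define R where "R = (\<Sum>j=1..n. u^3 / ((v j)^3 * (u + v j))) / of_nat n"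
  have ur: "cmod u \<le> r" using z unfolding u_def .
  have vj: "v j \<noteq> 0" "cmod u \<le> cmod (v j) / 2" "u + v j \<noteq> 0" if "j \<in> {1..n}" for j
  proof -
    show "v j \<noteq> 0" using far(2)[OF that] unfolding v_def by simp
    show "cmod u \<le> cmod (v j) / 2" using ur far(1)[OF that] unfolding v_def norm_of_real by (simp add: field_simps)
    then show "u + v j \<noteq> 0" using \<open>v j \<noteq> 0\<close> by (rule add_nonzero_if_norm_le_half)
  qed
  have moment: "(\<Sum>j=1..n. 1 / (v j)^k) / of_nat n = complex_of_real (E k)" for k
    unfolding E_def emp_int_def v_def by simp
  have key: "emp_stieltjes x n z - (complex_of_real I1 - complex_of_real I2 * u + complex_of_real I3 * u^2)
      = complex_of_real (E 1 - I1) - u * complex_of_real (E 2 - I2) + u^2 * complex_of_real (E 3 - I3) - R"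
  proof -
    have "emp_stieltjes x n z = (\<Sum>j=1..n. 1 / (u + v j)) / of_nat n"
      unfolding emp_stieltjes_def u_def v_def by (simp add: algebra_simps)
    also have "(\<Sum>j=1..n. 1 / (u + v j)) = (\<Sum>j=1..n. 1 / v j) - u * (\<Sum>j=1..n. 1 / (v j)^2)
        + u^2 * (\<Sum>j=1..n. 1 / (v j)^3) - (\<Sum>j=1..n. u^3 / ((v j)^3 * (u + v j)))"
      by (rule sum_inverse_add_taylor3) (use vj in auto)
    also have "(\<dots>) / of_nat n = complex_of_real (E 1) - u * complex_of_real (E 2) + u^2 * complex_of_real (E 3) - R"
      unfolding R_def moment[symmetric] by (simp add: diff_divide_distrib add_divide_distrib)
    finally show ?thesis by (simp add: algebra_simps)
  qed
  have bR: "cmod R \<le> 2 * r^3 * emp_int x n (\<lambda>s. 1 / \<bar>xs - s\<bar>^4)"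
  proof -
    have "cmod (u^3 / ((v j)^3 * (u + v j))) \<le> 2 * r^3 * (1 / \<bar>xs - x n j\<bar>^4)" if "j \<in> {1..n}" for j
    proof -
      have "cmod (u^3 / ((v j)^3 * (u + v j))) \<le> 2 * cmod u ^ 3 / cmod (v j) ^ 4"
        using norm_taylor3_remainder_le vj[OF that] by blast
      also have "\<dots> \<le> 2 * r^3 / cmod (v j) ^ 4"
        using ur by (intro divide_right_mono mult_left_mono power_mono) auto
      finally show ?thesis unfolding v_def norm_of_real by simp
    qed
    then have "cmod (\<Sum>j=1..n. u^3 / ((v j)^3 * (u + v j))) \<le> (\<Sum>j=1..n. 2 * r^3 * (1 / \<bar>xs - x n j\<bar>^4))"
      by (intro order_trans[OF norm_sum] sum_mono) auto
    then show ?thesis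
      unfolding R_def emp_int_def using n by (simp add: norm_divide sum_distrib_left divide_right_mono)
  qed
  have b2: "cmod (u * complex_of_real (E 2 - I2)) \<le> r * \<bar>E 2 - I2\<bar>"
    and b3: "cmod (u^2 * complex_of_real (E 3 - I3)) \<le> r^2 * \<bar>E 3 - I3\<bar>"
    using ur unfolding norm_mult norm_power norm_of_real by (auto intro!: mult_right_mono power_mono)
  have tri: "cmod (a - b + c - d) \<le> cmod a + cmod b + cmod c + cmod d" for a b c d :: complex
    using norm_triangle_ineq4[of "a - b + c" d] norm_triangle_ineq[of "a - b" c] norm_triangle_ineq4[of a b]
    by linarith
  have "cmod (emp_stieltjes x n z - (complex_of_real I1 - complex_of_real I2 * u + complex_of_real I3 * u^2))
      \<le> \<bar>E 1 - I1\<bar> + r * \<bar>E 2 - I2\<bar> + r^2 * \<bar>E 3 - I3\<bar> + 2 * r^3 * emp_int x n (\<lambda>s. 1 / \<bar>xs - s\<bar>^4)"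
    unfolding key using tri[of "complex_of_real (E 1 - I1)" "u * complex_of_real (E 2 - I2)"
        "u^2 * complex_of_real (E 3 - I3)" R] b2 b3 bR
    unfolding norm_of_real by linarith
  then show ?thesis unfolding u_def E_def power_one_right .
qed

lemma emp_stieltjes_deriv2_error_le:
  fixes x :: "nat \<Rightarrow> nat \<Rightarrow> real" and z :: complex and I3 r :: real
  assumes n: "0 < n" and z: "cmod (z - complex_of_real xs) \<le> r"
    and far: "\<And>j. j \<in> {1..n} \<Longrightarrow> 2 * r \<le> \<bar>xs - x n j\<bar>" "\<And>j. j \<in> {1..n} \<Longrightarrow> x n j \<noteq> xs"
  shows "cmod (deriv (deriv (emp_stieltjes x n)) z - 2 * complex_of_real I3)
    \<le> 2 * \<bar>emp_int x n (\<lambda>s. 1 / (xs - s)^3) - I3\<bar> + 80 * r * emp_int x n (\<lambda>s. 1 / \<bar>xs - s\<bar>^4)"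
proof -
  define u where "u = z - complex_of_real xs"
  define v where "v = (\<lambda>j. complex_of_real (xs - x n j))"
  define E3 where "E3 = emp_int x n (\<lambda>s. 1 / (xs - s)^3)"
  define D where "D = (\<Sum>j=1..n. 1 / (u + v j)^3 - 1 / (v j)^3) / of_nat n"
  have ur: "cmod u \<le> r" using z unfolding u_def .
  have vj: "v j \<noteq> 0" "cmod u \<le> cmod (v j) / 2" "u + v j \<noteq> 0" if "j \<in> {1..n}" for j
  proof -
    show "v j \<noteq> 0" using far(2)[OF that] unfolding v_def by simp
    show "cmod u \<le> cmod (v j) / 2" using ur far(1)[OF that] unfolding v_def norm_of_real by (simp add: field_simps)
    then show "u + v j \<noteq> 0" using \<open>v j \<noteq> 0\<close> by (rule add_nonzero_if_norm_le_half)
  qed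
  have zx: "z \<noteq> complex_of_real (x n j)" if "j \<in> {1..n}" for j
    using vj(3)[OF that] unfolding u_def v_def by auto
  have key: "deriv (deriv (emp_stieltjes x n)) z - 2 * complex_of_real I3 = 2 * complex_of_real (E3 - I3) + 2 * D"
  proof -
    have "(\<Sum>j=1..n. 1 / (z - complex_of_real (x n j))^3)
        = (\<Sum>j=1..n. 1 / (v j)^3) + (\<Sum>j=1..n. 1 / (u + v j)^3 - 1 / (v j)^3)"
      unfolding u_def v_def by (simp add: sum_subtractf algebra_simps)
    moreover have "(\<Sum>j=1..n. 1 / (v j)^3) = complex_of_real E3 * of_nat n"
      unfolding E3_def emp_int_def v_def using n by simp
    moreover have "deriv (deriv (emp_stieltjes x n)) z
        = 2 * (\<Sum>j=1..n. 1 / (z - complex_of_real (x n j))^3) / of_nat n"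
      by (rule deriv2_emp_stieltjes) (rule zx)
    ultimately show ?thesis
      unfolding D_def using n by (simp add: field_simps)
  qed
  have bD: "cmod D \<le> 40 * r * emp_int x n (\<lambda>s. 1 / \<bar>xs - s\<bar>^4)"
  proof -
    have "cmod (1 / (u + v j)^3 - 1 / (v j)^3) \<le> 40 * r * (1 / \<bar>xs - x n j\<bar>^4)" if "j \<in> {1..n}" for j
    proof -
      have "cmod (1 / (u + v j)^3 - 1 / (v j)^3) \<le> 40 * cmod u / cmod (v j) ^ 4"
        using norm_inverse_cube_diff_le vj[OF that] by blast
      also have "\<dots> \<le> 40 * r / cmod (v j) ^ 4"
        using ur by (intro divide_right_mono) auto
      finally show ?thesis unfolding v_def norm_of_real by simp
    qed
    then have "cmod (\<Sum>j=1..n. 1 / (u + v j)^3 - 1 / (v j)^3) \<le> (\<Sum>j=1..n. 40 * r * (1 / \<bar>xs - x n j\<bar>^4))"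
      by (intro order_trans[OF norm_sum] sum_mono) auto
    then show ?thesis
      unfolding D_def emp_int_def using n by (simp add: norm_divide sum_distrib_left divide_right_mono)
  qed
  have "cmod (2 * complex_of_real (E3 - I3) + 2 * D) \<le> 2 * \<bar>E3 - I3\<bar> + 2 * cmod D"
    using norm_triangle_ineq[of "2 * complex_of_real (E3 - I3)" "2 * D"] unfolding norm_mult norm_of_real
    by simp
  then show ?thesis unfolding key E3_def[symmetric] using bD by linarith
qed

text \<open>The fourth inverse moment of \<open>\<mu>\<close> may diverge, so it is bounded by trading a power of
  the gap: \<open>|v|\<^sup>-\<^sup>4 \<le> \<delta>\<^sup>p\<^sup>-\<^sup>1 |v|\<^sup>-\<^sup>(\<^sup>3\<^sup>+\<^sup>p\<^sup>)\<close> with \<open>3 + p < \<kappa> + 1\<close>. The exponent \<open>p\<close> is chosen so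
  that the resulting growth \<open>n\<^sup>(\<^sup>1\<^sup>-\<^sup>p\<^sup>)\<^sup>/\<^sup>(\<^sup>\<kappa>\<^sup>+\<^sup>1\<^sup>)\<close> still fits the error budget.\<close>
lemma edge_exponent_choice:
  fixes \<kappa> \<epsilon> :: real
  assumes \<kappa>: "2 < \<kappa>" and \<epsilon>: "0 < \<epsilon>" "\<epsilon> < min ((\<kappa> - 2) / (6 * (\<kappa> + 1))) (1/15)"
  shows "3 / (\<kappa> + 1) < 1 - 6 * \<epsilon>"
    and "\<exists>p. 0 \<le> p \<and> p \<le> 1 \<and> 3 + p < \<kappa> + 1 \<and> (1 - p) / (\<kappa> + 1) \<le> 1/3 - 5 * \<epsilon>"
proof -
  have k1: "0 < \<kappa> + 1" using \<kappa> by simp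
  have "\<epsilon> < (\<kappa> - 2) / (6 * (\<kappa> + 1))" and e2: "\<epsilon> < 1/15" using \<epsilon>(2) by simp_all
  then have e1: "\<epsilon> * (6 * (\<kappa> + 1)) < \<kappa> - 2" using k1 by (simp add: less_divide_eq)
  have "3 < (1 - 6 * \<epsilon>) * (\<kappa> + 1)" using e1 by (simp add: algebra_simps)
  then show "3 / (\<kappa> + 1) < 1 - 6 * \<epsilon>" using k1 by (simp add: divide_less_eq)
  define p where "p = max 0 (1 - (1/3 - 5 * \<epsilon>) * (\<kappa> + 1))"
  define P where "P = \<epsilon> * (\<kappa> + 1)"
  have "(1/3 - 5 * \<epsilon>) * (\<kappa> + 1) = (\<kappa> + 1) / 3 - 5 * P" and "6 * P < \<kappa> - 2"
    using e1 unfolding P_def by (simp_all add: algebra_simps)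
  then have "3 + (1 - (1/3 - 5 * \<epsilon>) * (\<kappa> + 1)) < \<kappa> + 1"
    using \<kappa> by (simp add: field_simps)
  then have "1 - p \<le> (1/3 - 5 * \<epsilon>) * (\<kappa> + 1)" "3 + p < \<kappa> + 1"
    using \<kappa> unfolding p_def by (auto simp: max_def)
  moreover have "0 \<le> p" "p \<le> 1" using e2 k1 unfolding p_def by (auto simp: max_def)
  ultimately show "\<exists>p. 0 \<le> p \<and> p \<le> 1 \<and> 3 + p < \<kappa> + 1 \<and> (1 - p) / (\<kappa> + 1) \<le> 1/3 - 5 * \<epsilon>"
    using k1 by (auto simp: divide_le_eq mult.commute)
qed

context edge_gap_setting
begin

lemma eventually_points_far:
  assumes e: "e < - 1 / (\<kappa> + 1)" and C: "0 < C"
  shows "eventually (\<lambda>n. \<forall>j\<in>{1..n}. 2 * (C * real n powr e) \<le> \<bar>xs - x n j\<bar> \<and> x n j \<noteq> xs) sequentially"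
proof -
  have "eventually (\<lambda>n. 2 * C / m0 * real n powr (e + 1 / (\<kappa> + 1)) \<le> 1) sequentially"
    using e by (intro eventually_mult_powr_le) auto
  moreover have "eventually (\<lambda>n. n \<ge> max N0 1) sequentially" by (rule eventually_ge_at_top)
  ultimately show ?thesis
  proof eventually_elim
    case (elim n)
    define \<delta> where "\<delta> = m0 * real n powr (-1 / (\<kappa> + 1))"
    have "2 * (C * real n powr e) = 2 * C * real n powr (e + 1 / (\<kappa> + 1)) * real n powr (-1 / (\<kappa> + 1))"
      by (simp add: powr_add[symmetric])
    also have "\<dots> \<le> \<delta>"
      unfolding \<delta>_def using elim(1) m0 by (intro mult_right_mono) (simp_all add: field_simps)
    finally have small: "2 * (C * real n powr e) \<le> \<delta>" .
    have \<delta>0: "0 < \<delta>" unfolding \<delta>_def using m0 elim(2) by simp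
    show ?case
    proof
      fix j assume j: "j \<in> {1..n}"
      have "\<delta> < \<bar>xs - x n j\<bar>"
        using gap[OF _ j] elim(2) unfolding \<delta>_def by auto
      then show "2 * (C * real n powr e) \<le> \<bar>xs - x n j\<bar> \<and> x n j \<noteq> xs"
        using small \<delta>0 by auto
    qed
  qed
qed

lemma fourth_inverse_moment_bound:
  assumes p: "0 \<le> p" "p \<le> 1" "3 + p < \<kappa> + 1"
  shows "\<exists>K N. \<forall>n\<ge>N. emp_int x n (\<lambda>s. 1 / \<bar>xs - s\<bar>^4) \<le> K * real n powr ((1 - p) / (\<kappa> + 1))"
proof -
  obtain A N where A: "\<And>n. n \<ge> N \<Longrightarrow> emp_int x n (\<lambda>s. \<bar>xs - s\<bar> powr (- (3 + p))) \<le> A"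
    using emp_int_abs_powr_bounded[of "3 + p"] p by auto
  have "emp_int x n (\<lambda>s. 1 / \<bar>xs - s\<bar>^4) \<le> (m0 powr (p - 1) * A) * real n powr ((1 - p) / (\<kappa> + 1))"
    if n: "n \<ge> max (max N N0) 1" for n
  proof -
    define \<delta> where "\<delta> = m0 * real n powr (-1 / (\<kappa> + 1))"
    have \<delta>0: "0 < \<delta>" unfolding \<delta>_def using m0 n by simp
    have "\<delta> \<le> \<bar>xs - x n j\<bar>" if "j \<in> {1..n}" for j
      using gap[OF _ that] n \<delta>0 unfolding \<delta>_def by force
    then have "emp_int x n (\<lambda>s. 1 / \<bar>xs - s\<bar>^4) \<le> emp_int x n (\<lambda>s. \<delta> powr (p - 1) * \<bar>xs - s\<bar> powr (- (3 + p)))"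
      unfolding emp_int_def using p
      by (intro divide_right_mono sum_mono inverse_pow4_le_powr[OF \<delta>0]) auto
    also have "\<dots> \<le> \<delta> powr (p - 1) * A"
      unfolding emp_int_mult_left using A[of n] n by (intro mult_left_mono) auto
    also have "\<delta> powr (p - 1) = m0 powr (p - 1) * real n powr (-1 / (\<kappa> + 1) * (p - 1))"
      unfolding \<delta>_def using m0 n by (simp add: powr_mult powr_powr)
    also have "-1 / (\<kappa> + 1) * (p - 1) = (1 - p) / (\<kappa> + 1)" using kappa by (simp add: field_simps)
    finally show ?thesis by (simp add: mult_ac)
  qed
  then show ?thesis by blast
qed

end

context edge_gap_setting
begin

lemma edge_estimates:
  assumes \<epsilon>: "0 < \<epsilon>" "\<epsilon> < min ((\<kappa> - 2) / (6 * (\<kappa> + 1))) (1/15)" and C: "0 < C"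
  obtains p K N where "(1 - p) / (\<kappa> + 1) \<le> 1/3 - 5 * \<epsilon>" and "0 \<le> K" and "1 \<le> N"
    and "\<And>n k. n \<ge> N \<Longrightarrow> k \<in> {1, 2, 3} \<Longrightarrow>
      \<bar>emp_int x n (\<lambda>s. 1 / (xs - s)^k) - (\<integral>s. 1 / (xs - s)^k \<partial>M)\<bar> \<le> K * real n powr (-1 + k / (\<kappa> + 1))"
    and "\<And>n. n \<ge> N \<Longrightarrow> emp_int x n (\<lambda>s. 1 / \<bar>xs - s\<bar>^4) \<le> K * real n powr ((1 - p) / (\<kappa> + 1))"
    and "\<And>n j. n \<ge> N \<Longrightarrow> j \<in> {1..n} \<Longrightarrow> 2 * (C * real n powr (-1/3 + \<epsilon>)) \<le> \<bar>xs - x n j\<bar>"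
    and "\<And>n j. n \<ge> N \<Longrightarrow> j \<in> {1..n} \<Longrightarrow> x n j \<noteq> xs"
proof -
  obtain p where p: "0 \<le> p" "p \<le> 1" "3 + p < \<kappa> + 1" "(1 - p) / (\<kappa> + 1) \<le> 1/3 - 5 * \<epsilon>"
    using edge_exponent_choice(2)[OF kappa \<epsilon>] by blast
  have e: "-1/3 + \<epsilon> < - 1 / (\<kappa> + 1)"
    using edge_exponent_choice(1)[OF kappa \<epsilon>] \<epsilon>(1) by (simp add: field_simps)
  have "\<exists>K N. \<forall>n\<ge>N. \<bar>emp_int x n (\<lambda>s. 1 / (xs - s)^k) - (\<integral>s. 1 / (xs - s)^k \<partial>M)\<bar>
      \<le> K * real n powr (-1 + k / (\<kappa> + 1))" if "k \<in> {1, 2, 3}" for k :: nat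
    using that kappa by (intro inverse_power_discrepancy(2)) auto
  then obtain Kk Nk where Kk: "\<And>k n. k \<in> {1, 2, 3} \<Longrightarrow> n \<ge> Nk k \<Longrightarrow>
      \<bar>emp_int x n (\<lambda>s. 1 / (xs - s)^k) - (\<integral>s. 1 / (xs - s)^k \<partial>M)\<bar> \<le> Kk k * real n powr (-1 + k / (\<kappa> + 1))"
    by metis
  obtain K4 N4 where K4: "\<And>n. n \<ge> N4 \<Longrightarrow>
      emp_int x n (\<lambda>s. 1 / \<bar>xs - s\<bar>^4) \<le> K4 * real n powr ((1 - p) / (\<kappa> + 1))"
    using fourth_inverse_moment_bound[OF p(1-3)] by blast
  obtain Nf where Nf: "\<And>n. n \<ge> Nf \<Longrightarrow> \<forall>j\<in>{1..n}. 2 * (C * real n powr (-1/3 + \<epsilon>)) \<le> \<bar>xs - x n j\<bar> \<and> x n j \<noteq> xs"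
    using eventually_points_far[OF e C] unfolding eventually_sequentially by blast
  define K where "K = \<bar>Kk 1\<bar> + \<bar>Kk 2\<bar> + \<bar>Kk 3\<bar> + \<bar>K4\<bar>"
  define N where "N = Max {Nk 1, Nk 2, Nk 3, N4, Nf, 1}"
  have N: "Nk k \<le> N" if "k \<in> {1, 2, 3}" for k
    using that unfolding N_def by auto
  have N': "N4 \<le> N" "Nf \<le> N" "1 \<le> N" unfolding N_def by simp_all
  have KK: "Kk k \<le> K" if "k \<in> {1, 2, 3}" for k
    using that abs_ge_self[of "Kk k"] abs_ge_zero[of "Kk 1"] abs_ge_zero[of "Kk 2"] abs_ge_zero[of "Kk 3"]
      abs_ge_zero[of K4]
    unfolding K_def by auto
  have K4K: "K4 \<le> K"
    using abs_ge_self[of K4] abs_ge_zero[of "Kk 1"] abs_ge_zero[of "Kk 2"] abs_ge_zero[of "Kk 3"]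
    unfolding K_def by linarith
  show ?thesis
  proof (rule that[of p K N])
    show "0 \<le> K" unfolding K_def by simp
    show "\<bar>emp_int x n (\<lambda>s. 1 / (xs - s)^k) - (\<integral>s. 1 / (xs - s)^k \<partial>M)\<bar> \<le> K * real n powr (-1 + k / (\<kappa> + 1))"
      if "n \<ge> N" "k \<in> {1, 2, 3}" for n k
      using Kk[OF that(2) order_trans[OF N[OF that(2)] that(1)]] KK[OF that(2)]
      by (meson mult_right_mono order_trans powr_ge_zero)
    show "emp_int x n (\<lambda>s. 1 / \<bar>xs - s\<bar>^4) \<le> K * real n powr ((1 - p) / (\<kappa> + 1))" if "n \<ge> N" for n
      using K4[OF order_trans[OF N'(1) that]] K4K
      by (meson mult_right_mono order_trans powr_ge_zero)
    show "2 * (C * real n powr (-1/3 + \<epsilon>)) \<le> \<bar>xs - x n j\<bar>" "x n j \<noteq> xs"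
      if "n \<ge> N" "j \<in> {1..n}" for n j
      using Nf[OF order_trans[OF N'(2) that(1)]] that(2) by blast+
  qed (fact p(4) N'(3))+
qed

lemma stieltjes_taylor_expansion:
  assumes \<epsilon>: "0 < \<epsilon>" "\<epsilon> < min ((\<kappa> - 2) / (6 * (\<kappa> + 1))) (1/15)" and C: "0 < C"
  shows "\<exists>K N. \<forall>n\<ge>N. \<forall>z. cmod (z - complex_of_real xs) \<le> C * real n powr (-1/3 + \<epsilon>) \<longrightarrow>
        cmod (emp_stieltjes x n z
              - (complex_of_real (Gcoef M xs 0)
                 + complex_of_real (Gcoef M xs 1) * (z - complex_of_real xs)
                 + complex_of_real (Gcoef M xs 2) / 2 * (z - complex_of_real xs) ^ 2))
          \<le> K * real n powr (-2/3 - 2 * \<epsilon>)"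
proof -
  obtain p K N where p: "(1 - p) / (\<kappa> + 1) \<le> 1/3 - 5 * \<epsilon>" and K0: "0 \<le> K" and N1: "1 \<le> N"
    and Ek: "\<And>n k. n \<ge> N \<Longrightarrow> k \<in> {1, 2, 3} \<Longrightarrow>
      \<bar>emp_int x n (\<lambda>s. 1 / (xs - s)^k) - (\<integral>s. 1 / (xs - s)^k \<partial>M)\<bar> \<le> K * real n powr (-1 + k / (\<kappa> + 1))"
    and Q: "\<And>n. n \<ge> N \<Longrightarrow> emp_int x n (\<lambda>s. 1 / \<bar>xs - s\<bar>^4) \<le> K * real n powr ((1 - p) / (\<kappa> + 1))"
    and far: "\<And>n j. n \<ge> N \<Longrightarrow> j \<in> {1..n} \<Longrightarrow> 2 * (C * real n powr (-1/3 + \<epsilon>)) \<le> \<bar>xs - x n j\<bar>"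
      "\<And>n j. n \<ge> N \<Longrightarrow> j \<in> {1..n} \<Longrightarrow> x n j \<noteq> xs"
    using edge_estimates[OF \<epsilon> C] by blast
  have \<alpha>: "3 / (\<kappa> + 1) < 1 - 6 * \<epsilon>" by (rule edge_exponent_choice(1)[OF kappa \<epsilon>])
  have G: "Gcoef M xs 0 = (\<integral>s. 1 / (xs - s) \<partial>M)" "Gcoef M xs 1 = - (\<integral>s. 1 / (xs - s)^2 \<partial>M)"
    "Gcoef M xs 2 = 2 * (\<integral>s. 1 / (xs - s)^3 \<partial>M)"
    unfolding Gcoef_def by (simp_all add: numeral_2_eq_2 numeral_3_eq_3)
  define T where "T = -2/3 - 2 * \<epsilon>"
  have "cmod (emp_stieltjes x n z - (complex_of_real (Gcoef M xs 0)
                 + complex_of_real (Gcoef M xs 1) * (z - complex_of_real xs)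
                 + complex_of_real (Gcoef M xs 2) / 2 * (z - complex_of_real xs) ^ 2))
      \<le> (K + C * K + C^2 * K + 2 * C^3 * K) * real n powr T"
    if n: "n \<ge> N" and z: "cmod (z - complex_of_real xs) \<le> C * real n powr (-1/3 + \<epsilon>)" for n z
  proof -
    define r where "r = C * real n powr (-1/3 + \<epsilon>)"
    have n1: "1 \<le> real n" using N1 n by simp
    have r0: "0 \<le> r" using C unfolding r_def by simp
    have r2: "r^2 = C^2 * real n powr ((-1/3 + \<epsilon>) + (-1/3 + \<epsilon>))"
      and r3: "r^3 = C^3 * real n powr ((-1/3 + \<epsilon>) + (-1/3 + \<epsilon>) + (-1/3 + \<epsilon>))"
      unfolding r_def powr_add by (simp_all add: power2_eq_square power3_eq_cube mult_ac)
    have E: "\<bar>emp_int x n (\<lambda>s. 1 / (xs - s)) - (\<integral>s. 1 / (xs - s) \<partial>M)\<bar> \<le> K * real n powr (-1 + 1 / (\<kappa> + 1))"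
      "\<bar>emp_int x n (\<lambda>s. 1 / (xs - s)^2) - (\<integral>s. 1 / (xs - s)^2 \<partial>M)\<bar> \<le> K * real n powr (-1 + 2 / (\<kappa> + 1))"
      "\<bar>emp_int x n (\<lambda>s. 1 / (xs - s)^3) - (\<integral>s. 1 / (xs - s)^3 \<partial>M)\<bar> \<le> K * real n powr (-1 + 3 / (\<kappa> + 1))"
      using Ek[OF n, of 1] Ek[OF n, of 2] Ek[OF n, of 3] by simp_all
    have key: "complex_of_real (Gcoef M xs 0) + complex_of_real (Gcoef M xs 1) * (z - complex_of_real xs)
          + complex_of_real (Gcoef M xs 2) / 2 * (z - complex_of_real xs) ^ 2
        = complex_of_real (\<integral>s. 1 / (xs - s) \<partial>M) - complex_of_real (\<integral>s. 1 / (xs - s)^2 \<partial>M) * (z - complex_of_real xs)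
          + complex_of_real (\<integral>s. 1 / (xs - s)^3 \<partial>M) * (z - complex_of_real xs) ^ 2"
      unfolding G by simp
    have "cmod (emp_stieltjes x n z - (complex_of_real (\<integral>s. 1 / (xs - s) \<partial>M)
          - complex_of_real (\<integral>s. 1 / (xs - s)^2 \<partial>M) * (z - complex_of_real xs)
          + complex_of_real (\<integral>s. 1 / (xs - s)^3 \<partial>M) * (z - complex_of_real xs) ^ 2))
      \<le> \<bar>emp_int x n (\<lambda>s. 1 / (xs - s)) - (\<integral>s. 1 / (xs - s) \<partial>M)\<bar>
        + r * \<bar>emp_int x n (\<lambda>s. 1 / (xs - s)^2) - (\<integral>s. 1 / (xs - s)^2 \<partial>M)\<bar>
        + r^2 * \<bar>emp_int x n (\<lambda>s. 1 / (xs - s)^3) - (\<integral>s. 1 / (xs - s)^3 \<partial>M)\<bar>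
        + 2 * r^3 * emp_int x n (\<lambda>s. 1 / \<bar>xs - s\<bar>^4)"
      using far[OF n] z n1 unfolding r_def by (intro emp_stieltjes_taylor_error_le) auto
    also have "\<dots> \<le> K * real n powr (-1 + 1 / (\<kappa> + 1)) + r * (K * real n powr (-1 + 2 / (\<kappa> + 1)))
        + r^2 * (K * real n powr (-1 + 3 / (\<kappa> + 1))) + 2 * r^3 * (K * real n powr ((1 - p) / (\<kappa> + 1)))"
      using E Q[OF n] r0 by (intro add_mono mult_left_mono) auto
    also have "\<dots> \<le> K * real n powr T + C * K * real n powr T + C^2 * K * real n powr T + 2 * C^3 * K * real n powr T"
    proof (intro add_mono)
      define a where "a = 1 / (\<kappa> + 1)"
      have A: "1 / (\<kappa> + 1) = a" "2 / (\<kappa> + 1) = 2 * a" "3 / (\<kappa> + 1) = 3 * a"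
        unfolding a_def by simp_all
      have a_lt: "a < 1/3 - 2 * \<epsilon>" using \<alpha> A(3) by linarith
      have x1: "-1 + 1 / (\<kappa> + 1) \<le> T"
        and x2: "(-1/3 + \<epsilon>) + (-1 + 2 / (\<kappa> + 1)) \<le> T"
        and x3: "((-1/3 + \<epsilon>) + (-1/3 + \<epsilon>)) + (-1 + 3 / (\<kappa> + 1)) \<le> T"
        and x4: "((-1/3 + \<epsilon>) + (-1/3 + \<epsilon>) + (-1/3 + \<epsilon>)) + (1 - p) / (\<kappa> + 1) \<le> T"
        using A a_lt p \<epsilon>(1) unfolding T_def by linarith+
      show "K * real n powr (-1 + 1 / (\<kappa> + 1)) \<le> K * real n powr T"
        by (rule mult_left_mono[OF powr_mono[OF x1 n1] K0])
      show "r * (K * real n powr (-1 + 2 / (\<kappa> + 1))) \<le> C * K * real n powr T"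
        unfolding r_def by (rule mult_powr_le_powr[OF n1 less_imp_le[OF C] K0 x2])
      show "r^2 * (K * real n powr (-1 + 3 / (\<kappa> + 1))) \<le> C^2 * K * real n powr T"
        unfolding r2 by (rule mult_powr_le_powr[OF n1 _ K0 x3]) simp
      have "r^3 * (K * real n powr ((1 - p) / (\<kappa> + 1))) \<le> C^3 * K * real n powr T"
        unfolding r3 by (rule mult_powr_le_powr[OF n1 _ K0 x4]) (use C in simp)
      then show "2 * r^3 * (K * real n powr ((1 - p) / (\<kappa> + 1))) \<le> 2 * C^3 * K * real n powr T"
        by simp
    qed
    finally show ?thesis unfolding key by (simp add: distrib_right)
  qed
  then show ?thesis unfolding T_def by blast
qed

lemma stieltjes_deriv2_expansion:
  assumes \<epsilon>: "0 < \<epsilon>" "\<epsilon> < min ((\<kappa> - 2) / (6 * (\<kappa> + 1))) (1/15)" and C: "0 < C"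
  shows "\<exists>K N. \<forall>n\<ge>N. \<forall>z. cmod (z - complex_of_real xs) \<le> C * real n powr (-1/3 + \<epsilon>) \<longrightarrow>
        cmod (deriv (deriv (emp_stieltjes x n)) z - complex_of_real (Gcoef M xs 2))
          \<le> K * real n powr (- \<epsilon>)"
proof -
  obtain p K N where p: "(1 - p) / (\<kappa> + 1) \<le> 1/3 - 5 * \<epsilon>" and K0: "0 \<le> K" and N1: "1 \<le> N"
    and Ek: "\<And>n k. n \<ge> N \<Longrightarrow> k \<in> {1, 2, 3} \<Longrightarrow>
      \<bar>emp_int x n (\<lambda>s. 1 / (xs - s)^k) - (\<integral>s. 1 / (xs - s)^k \<partial>M)\<bar> \<le> K * real n powr (-1 + k / (\<kappa> + 1))"
    and Q: "\<And>n. n \<ge> N \<Longrightarrow> emp_int x n (\<lambda>s. 1 / \<bar>xs - s\<bar>^4) \<le> K * real n powr ((1 - p) / (\<kappa> + 1))"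
    and far: "\<And>n j. n \<ge> N \<Longrightarrow> j \<in> {1..n} \<Longrightarrow> 2 * (C * real n powr (-1/3 + \<epsilon>)) \<le> \<bar>xs - x n j\<bar>"
      "\<And>n j. n \<ge> N \<Longrightarrow> j \<in> {1..n} \<Longrightarrow> x n j \<noteq> xs"
    using edge_estimates[OF \<epsilon> C] by blast
  have \<alpha>: "3 / (\<kappa> + 1) < 1 - 6 * \<epsilon>" by (rule edge_exponent_choice(1)[OF kappa \<epsilon>])
  have G2: "complex_of_real (Gcoef M xs 2) = 2 * complex_of_real (\<integral>s. 1 / (xs - s)^3 \<partial>M)"
    unfolding Gcoef_def by (simp add: numeral_3_eq_3)
  have "cmod (deriv (deriv (emp_stieltjes x n)) z - complex_of_real (Gcoef M xs 2))
      \<le> (2 * K + 80 * C * K) * real n powr (- \<epsilon>)"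
    if n: "n \<ge> N" and z: "cmod (z - complex_of_real xs) \<le> C * real n powr (-1/3 + \<epsilon>)" for n z
  proof -
    define r where "r = C * real n powr (-1/3 + \<epsilon>)"
    have n1: "1 \<le> real n" using N1 n by simp
    have r0: "0 \<le> r" using C unfolding r_def by simp
    have "cmod (deriv (deriv (emp_stieltjes x n)) z - complex_of_real (Gcoef M xs 2))
      \<le> 2 * (K * real n powr (-1 + 3 / (\<kappa> + 1))) + 80 * r * (K * real n powr ((1 - p) / (\<kappa> + 1)))"
      using far[OF n] z n1 r0 Ek[OF n, of 3] Q[OF n] unfolding G2 r_def[symmetric]
      by (intro order_trans[OF emp_stieltjes_deriv2_error_le[where r = r]] add_mono mult_left_mono) auto
    also have "\<dots> \<le> 2 * (K * real n powr (- \<epsilon>)) + 80 * C * (K * real n powr (- \<epsilon>))"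
    proof (intro add_mono)
      have "-1 + 3 / (\<kappa> + 1) \<le> - \<epsilon>" using \<alpha> \<epsilon>(1) by linarith
      then show "2 * (K * real n powr (-1 + 3 / (\<kappa> + 1))) \<le> 2 * (K * real n powr (- \<epsilon>))"
        using n1 K0 by (intro mult_left_mono powr_mono) auto
      have y: "(-1/3 + \<epsilon>) + (1 - p) / (\<kappa> + 1) \<le> - \<epsilon>" using p \<epsilon>(1) by linarith
      have "r * (K * real n powr ((1 - p) / (\<kappa> + 1))) \<le> C * K * real n powr (- \<epsilon>)"
        unfolding r_def by (rule mult_powr_le_powr[OF n1 less_imp_le[OF C] K0 y])
      then show "80 * r * (K * real n powr ((1 - p) / (\<kappa> + 1))) \<le> 80 * C * (K * real n powr (- \<epsilon>))"
        by simp
    qed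
    finally show ?thesis by (simp add: algebra_simps)
  qed
  then show ?thesis by blast
qed

end

lemma asymp_equiv_at_le_double:
  fixes f g :: "real \<Rightarrow> real"
  assumes fg: "f \<sim>[at a] g" and g: "\<And>t. t \<noteq> a \<Longrightarrow> 0 < g t"
  obtains \<rho> where "\<rho> > 0" "\<And>t. t \<noteq> a \<Longrightarrow> \<bar>t - a\<bar> < \<rho> \<Longrightarrow> f t \<le> 2 * g t"
proof -
  have "eventually (\<lambda>t. t \<noteq> a) (at a)" by (simp add: eventually_at_filter)
  then have "eventually (\<lambda>t. f t \<noteq> 0 \<or> g t \<noteq> 0) (at a)"
    by eventually_elim (use g in force)
  from order_tendstoD(2)[OF asymp_equivD_strong[OF fg this], of 2]
  obtain \<rho> where "\<rho> > 0" and \<rho>: "\<And>t. t \<noteq> a \<Longrightarrow> dist t a < \<rho> \<Longrightarrow> f t / g t < 2"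
    unfolding eventually_at by auto
  moreover have "f t \<le> 2 * g t" if "t \<noteq> a" "\<bar>t - a\<bar> < \<rho>" for t
    using \<rho>[OF that(1)] that g[OF that(1)] by (simp add: dist_real_def divide_less_eq)
  ultimately show ?thesis using that by blast
qed

theorem proposition2p1:
  fixes x :: "nat \<Rightarrow> nat \<Rightarrow> real"
    and M :: "real measure" and \<psi> :: "real \<Rightarrow> real"
    and xs c \<kappa> \<epsilon> :: real
  assumes \<comment> \<open>Assumption 1\<close>
    A1_bdd: "\<exists>B. \<forall>n j. 1 \<le> j \<and> j \<le> n \<longrightarrow> \<bar>x n j\<bar> \<le> B"
    and A1_prob: "prob_space M"
    and A1_dens: "M = density lborel (\<lambda>t. ennreal (\<psi> t))"
    and A1_meas: "\<psi> \<in> borel_measurable borel"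
    and A1_nonneg: "\<And>t. \<psi> t \<ge> 0"
    and A1_weak: "emp_weak_conv x M"
    and A1_cont: "continuous_on (msupp M) \<psi>"
    and A1_c: "c > 0"
    and A1_asymp: "\<psi> \<sim>[at xs] (\<lambda>t. c * \<bar>t - xs\<bar> powr \<kappa>)"
    and \<comment> \<open>Assumption 2\<close>
    A2: "\<exists>M0 n0. \<forall>n\<ge>n0. \<forall>t. \<bar>emp_cdf x n t - measure M {..t}\<bar> \<le> M0 / real n"
    and \<comment> \<open>Assumption 3\<close>
    A3: "\<exists>m0>0. \<exists>n0. \<forall>n\<ge>n0. \<forall>j\<in>{1..n}.
           x n j \<notin> {xs - m0 * real n powr (-1/(\<kappa>+1)) .. xs + m0 * real n powr (-1/(\<kappa>+1))}"
    and kappa: "\<kappa> > 2"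
    and eps_pos: "0 < \<epsilon>"
    and eps_bd: "\<epsilon> < min ((\<kappa> - 2) / (6 * (\<kappa> + 1))) (1/15)"
  shows "\<forall>C>0.
     (\<exists>K N. \<forall>n\<ge>N. \<forall>z. cmod (z - complex_of_real xs) \<le> C * real n powr (-1/3 + \<epsilon>) \<longrightarrow>
        cmod (emp_stieltjes x n z
              - (complex_of_real (Gcoef M xs 0)
                 + complex_of_real (Gcoef M xs 1) * (z - complex_of_real xs)
                 + complex_of_real (Gcoef M xs 2) / 2 * (z - complex_of_real xs) ^ 2))
          \<le> K * real n powr (-2/3 - 2 * \<epsilon>)) \<and>
     (\<exists>K N. \<forall>n\<ge>N. \<forall>z. cmod (z - complex_of_real xs) \<le> C * real n powr (-1/3 + \<epsilon>) \<longrightarrow>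
        cmod (deriv (deriv (emp_stieltjes x n)) z - complex_of_real (Gcoef M xs 2))
          \<le> K * real n powr (- \<epsilon>))"
proof -
  obtain B0 where B0: "\<And>n j. j \<in> {1..n} \<Longrightarrow> \<bar>x n j\<bar> \<le> B0" using A1_bdd by auto
  obtain M0 n0 where M0: "\<And>n t. n \<ge> n0 \<Longrightarrow> \<bar>emp_cdf x n t - measure M {..t}\<bar> \<le> M0 / real n"
    using A2 by blast
  obtain m0 n1 where m0: "m0 > 0" and gap: "\<And>n j. n \<ge> n1 \<Longrightarrow> j \<in> {1..n} \<Longrightarrow>
      x n j \<notin> {xs - m0 * real n powr (-1/(\<kappa>+1)) .. xs + m0 * real n powr (-1/(\<kappa>+1))}"
    using A3 by blast
  obtain \<rho> where \<rho>: "\<rho> > 0"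
    and near: "\<And>t. t \<noteq> xs \<Longrightarrow> \<bar>t - xs\<bar> < \<rho> \<Longrightarrow> \<psi> t \<le> 2 * (c * \<bar>t - xs\<bar> powr \<kappa>)"
    using asymp_equiv_at_le_double[OF A1_asymp] A1_c by auto
  have cdfb: "\<bar>emp_cdf x n t - measure M {..t}\<bar> \<le> M0 / real n" if "max (max n0 n1) 1 \<le> n" for n t
    using M0 that by simp
  have gap': "x n j \<notin> {xs - m0 * real n powr (-1/(\<kappa>+1)) .. xs + m0 * real n powr (-1/(\<kappa>+1))}"
    if "max (max n0 n1) 1 \<le> n" "j \<in> {1..n}" for n j
    using gap that by simp
  have near': "\<psi> t \<le> 2 * c * \<bar>t - xs\<bar> powr \<kappa>" if "t \<noteq> xs" "\<bar>t - xs\<bar> < \<rho>" for t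
    using near[OF that] by (simp add: mult.assoc)
  have "1 \<le> max (max n0 n1) (1::nat)" by simp
  interpret edge_gap_setting x M \<psi> xs c \<kappa> B0 M0 m0 \<rho> "max (max n0 n1) 1"
    by (intro edge_gap_setting.intro)
       (fact A1_prob A1_dens A1_meas A1_nonneg A1_c B0 cdfb \<open>1 \<le> max (max n0 n1) 1\<close> m0 gap' \<rho> near' kappa)+
  show ?thesis
    using stieltjes_taylor_expansion[OF eps_pos eps_bd] stieltjes_deriv2_expansion[OF eps_pos eps_bd] by blast
qed

end
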